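(* Let $\mathbb{K}$ be a field, $S=\mathbb{K}[x_1,\ldots,x_{2m}]$, and let $H$ be a simple graph on $\{x_1,\ldots,x_m\}$. Let $I\subseteq S$ be a support-$2$ monomial ideal such that $G(I)$ is the whiskered graph $W_H$, i.e. $E(G(I))=E(H)\cup\{\{x_1,x_{m+1}\},\ldots,\{x_m,x_{2m}\}\}$. Assume that $I$ has no embedded associated primes, $G(I)$ is triangle-free, and $\alpha_{i,j}\le 1$ for all $1\le i,j\le 2m$. Then the following are equivalent: (1) $I^{(2)}=I^2$; (2) for each edge $\{x_i,x_j\}\in E(H)$, either ($w_{i,m+i}=w_{i,j}$ and $w_{j,m+j}=w_{j,i}$) or ($w_{i,m+i}\ge 2w_{i,j}$ and $w_{j,m+j}\ge 2w_{j,i}$).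
   Context: For a monomial ideal $I$, $\mathcal{G}(I)$ denotes its minimal set of monomial generators. $I$ is a support-$2$ monomial ideal if every element of $\mathcal{G}(I)$ has the form $x_i^ax_j^b$ with $i<j$ and $a,b\ge 1$. The underlying simple graph $G(I)$ has an edge $\{x_i,x_j\}$ whenever some element of $\mathcal{G}(I)$ has support $\{x_i,x_j\}$. $\alpha_{i,j}$ is the number of elements of $\mathcal{G}(I)$ with support exactly $\{x_i,x_j\}$ (so here each edge has exactly one such generator). For an edge $\{x_i,x_j\}$ of $G(I)$, $w_{i,j}$ denotes the exponent of $x_i$ in the unique element of $\mathcal{G}(I)$ with support $\{x_i,x_j\}$ (so that generator is $x_i^{w_{i,j}}x_j^{w_{j,i}}$). Symbolic power: $I^{(2)}=\bigcap_{P\in\mathrm{MinAss}(I)}(I^2S_P\cap S)$ over the minimal primes of $I$. *)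

theory Defs
  imports "HOL-Library.Poly_Mapping"
begin

text \<open>Multivariate polynomials over a field: finitely supported maps from monomials
  (exponent vectors) to coefficients.
  Variable x_i is index i.\<close>

type_synonym 'k mpoly = "(nat \<Rightarrow>\<^sub>0 nat) \<Rightarrow>\<^sub>0 'k"

definition poly_ring :: "nat \<Rightarrow> 'k::field mpoly set" where
  "poly_ring n = {p. \<forall>mon \<in> Poly_Mapping.keys p. Poly_Mapping.keys (mon :: nat \<Rightarrow>\<^sub>0 nat) \<subseteq> {1..n}}"

definition mono2 :: "nat \<Rightarrow> nat \<Rightarrow> nat \<Rightarrow> nat \<Rightarrow> 'k::field mpoly" where
  "mono2 i a j b = Poly_Mapping.single (Poly_Mapping.single i a + Poly_Mapping.single j b) 1"

definition is_ideal :: "'k::field mpoly set \<Rightarrow> 'k mpoly set \<Rightarrow> bool" where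
  "is_ideal S J \<longleftrightarrow> J \<subseteq> S \<and> 0 \<in> J \<and> (\<forall>a\<in>J. \<forall>b\<in>J. a + b \<in> J)
     \<and> (\<forall>s\<in>S. \<forall>a\<in>J. s * a \<in> J)"

definition gen_ideal :: "'k::field mpoly set \<Rightarrow> 'k mpoly set \<Rightarrow> 'k mpoly set" where
  "gen_ideal S G = \<Inter>{J. is_ideal S J \<and> G \<subseteq> J}"

definition ideal_prod :: "'k::field mpoly set \<Rightarrow> 'k mpoly set \<Rightarrow> 'k mpoly set \<Rightarrow> 'k mpoly set" where
  "ideal_prod S I J = gen_ideal S {a * b | a b. a \<in> I \<and> b \<in> J}"

definition is_prime_ideal :: "'k::field mpoly set \<Rightarrow> 'k mpoly set \<Rightarrow> bool" where
  "is_prime_ideal S P \<longleftrightarrow> is_ideal S P \<and> P \<noteq> S \<and>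
     (\<forall>a\<in>S. \<forall>b\<in>S. a * b \<in> P \<longrightarrow> a \<in> P \<or> b \<in> P)"

definition min_primes :: "'k::field mpoly set \<Rightarrow> 'k mpoly set \<Rightarrow> 'k mpoly set set" where
  "min_primes S I = {P. is_prime_ideal S P \<and> I \<subseteq> P \<and>
     (\<forall>Q. is_prime_ideal S Q \<and> I \<subseteq> Q \<and> Q \<subseteq> P \<longrightarrow> Q = P)}"

definition ass_primes :: "'k::field mpoly set \<Rightarrow> 'k mpoly set \<Rightarrow> 'k mpoly set set" where
  "ass_primes S I = {P. is_prime_ideal S P \<and> (\<exists>f\<in>S. P = {g\<in>S. g * f \<in> I})}"

text \<open>Second symbolic power: intersection over minimal primes P of I^2 S_P \<inter> S,
  where I^2 S_P \<inter> S = {f. \<exists>s\<notin>P. s f \<in> I^2}.\<close>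
definition symb_power2 :: "'k::field mpoly set \<Rightarrow> 'k mpoly set \<Rightarrow> 'k mpoly set" where
  "symb_power2 S I = S \<inter> (\<Inter>P\<in>min_primes S I.
     {f\<in>S. \<exists>s\<in>S - P. s * f \<in> ideal_prod S I I})"

definition whiskered :: "nat \<Rightarrow> nat set set \<Rightarrow> nat set set" where
  "whiskered m EH = EH \<union> {{i, m + i} | i. i \<in> {1..m}}"

definition triangle_free :: "nat set set \<Rightarrow> bool" where
  "triangle_free E \<longleftrightarrow> \<not> (\<exists>a b c. {a,b} \<in> E \<and> {b,c} \<in> E \<and> {a,c} \<in> E
      \<and> a \<noteq> b \<and> b \<noteq> c \<and> a \<noteq> c)"

end

theory Submission
  imports Defs
begin

text \<open>The ideal \<open>I\<close> is the monomial ideal generated by the monomials \<open>x\<^sub>i\<^bsup>w i j\<^esup> x\<^sub>j\<^bsup>w j i\<^esup>\<close> of the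
  edges of \<open>W\<^sub>H\<close>, so \<open>I\<^sup>2\<close> is generated by the products of two of them. Its minimal primes are
  the primes \<open>P\<^sub>C\<close> generated by the variables of a minimal vertex cover \<open>C\<close> of \<open>W\<^sub>H\<close>, i.e.
  \<open>C = T \<union> {m + i | i \<notin> T}\<close> for a vertex cover \<open>T\<close> of \<open>H\<close>; localizing at \<open>P\<^sub>C\<close> makes the
  variables outside \<open>C\<close> invertible. Hence a monomial lies in \<open>I\<^bsup>(2)\<^esup>\<close> iff for every such \<open>C\<close> some
  product of two generators divides it in the coordinates \<open>C\<close>.

  If the weight condition (2) holds, these local divisibilities are glued into a global one
  by induction over partial covers, deciding one vertex of \<open>H\<close> at a time: whisker edges are
  traded for edges of \<open>H\<close>, and triangle-freeness excludes the only configuration in which two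
  different edges of \<open>H\<close> at the same vertex would be needed. If (2) fails at an edge \<open>{i, j}\<close>,
  a monomial \<open>x\<^sub>i\<^sup>a x\<^sub>j\<^sup>b x\<^sub>m\<^sub>+\<^sub>j\<^sup>q\<close> with suitable \<open>a\<close>, \<open>b\<close> lies in \<open>I\<^bsup>(2)\<^esup>\<close> but not in \<open>I\<^sup>2\<close>.\<close>

abbreviation lookup :: "('a \<Rightarrow>\<^sub>0 'b::zero) \<Rightarrow> 'a \<Rightarrow> 'b" where "lookup \<equiv> Poly_Mapping.lookup"
abbreviation keys :: "('a \<Rightarrow>\<^sub>0 'b::zero) \<Rightarrow> 'a set" where "keys \<equiv> Poly_Mapping.keys"
abbreviation single :: "'a \<Rightarrow> 'b::zero \<Rightarrow> 'a \<Rightarrow>\<^sub>0 'b" where "single \<equiv> Poly_Mapping.single"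

section \<open>The polynomial ring and its ideals\<close>

lemma keys_add_nat: "keys ((a::'a \<Rightarrow>\<^sub>0 nat) + b) = keys a \<union> keys b"
  by (auto simp: in_keys_iff lookup_add)

lemma keys_diff_nat_subset: "keys ((a::'a \<Rightarrow>\<^sub>0 nat) - b) \<subseteq> keys a"
  by (auto simp: in_keys_iff lookup_minus)

lemma diff_add_cancel_nat_pointwise:
  assumes "\<And>k. lookup b k \<le> lookup (a::'a \<Rightarrow>\<^sub>0 nat) k"
  shows "(a - b) + b = a"
  by (rule poly_mapping_eqI) (use assms in \<open>simp add: lookup_add lookup_minus\<close>)

lemma poly_mapping_sum_single: "(\<Sum>a\<in>keys f. single a (lookup f a)) = f"
proof (rule poly_mapping_eqI)
  fix k
  have "lookup (\<Sum>a\<in>keys f. single a (lookup f a)) k = (\<Sum>a\<in>keys f. if a = k then lookup f a else 0)"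
    by (simp add: lookup_sum lookup_single when_def)
  also have "\<dots> = lookup f k"
    by (simp add: sum.delta in_keys_iff)
  finally show "lookup (\<Sum>a\<in>keys f. single a (lookup f a)) k = lookup f k" .
qed

lemma poly_ring_zero: "0 \<in> poly_ring n"
  by (simp add: poly_ring_def)

lemma poly_ring_one: "1 \<in> poly_ring n"
  by (simp add: poly_ring_def)

lemma poly_ring_single: "keys a \<subseteq> {1..n} \<Longrightarrow> single a c \<in> poly_ring n"
  unfolding poly_ring_def by auto

lemma poly_ring_add: "a \<in> poly_ring n \<Longrightarrow> b \<in> poly_ring n \<Longrightarrow> a + b \<in> poly_ring n"
  unfolding poly_ring_def using keys_add[of a b] by auto

lemma poly_ring_uminus: "a \<in> poly_ring n \<Longrightarrow> - a \<in> poly_ring n"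
  unfolding poly_ring_def by simp

lemma poly_ring_mult:
  assumes "a \<in> poly_ring n" "b \<in> poly_ring n"
  shows "a * b \<in> poly_ring n"
  unfolding poly_ring_def mem_Collect_eq
proof (intro ballI)
  fix c assume "c \<in> keys (a * b)"
  then obtain x y where "c = x + y" "x \<in> keys a" "y \<in> keys b"
    using keys_mult[of a b] by blast
  then show "keys c \<subseteq> {1..n}"
    using assms keys_add_nat[of x y] unfolding poly_ring_def by auto
qed

lemma is_ideal_poly_ring: "is_ideal (poly_ring n) (poly_ring n)"
  unfolding is_ideal_def using poly_ring_zero poly_ring_add poly_ring_mult by blast

lemma is_ideal_subset: "is_ideal S J \<Longrightarrow> J \<subseteq> S"
  unfolding is_ideal_def by blast

lemma is_ideal_zero: "is_ideal S J \<Longrightarrow> 0 \<in> J"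
  unfolding is_ideal_def by blast

lemma is_ideal_add: "is_ideal S J \<Longrightarrow> a \<in> J \<Longrightarrow> b \<in> J \<Longrightarrow> a + b \<in> J"
  unfolding is_ideal_def by blast

lemma is_ideal_mult: "is_ideal S J \<Longrightarrow> s \<in> S \<Longrightarrow> a \<in> J \<Longrightarrow> s * a \<in> J"
  unfolding is_ideal_def by blast

lemma is_ideal_diff:
  assumes J: "is_ideal (poly_ring n) J" and "a \<in> J" "b \<in> J"
  shows "a - b \<in> J"
proof -
  have "(- 1) * b \<in> J"
    using is_ideal_mult[OF J] poly_ring_uminus[OF poly_ring_one] \<open>b \<in> J\<close> by blast
  then have "a + (- 1) * b \<in> J"
    using is_ideal_add[OF J \<open>a \<in> J\<close>] by blast
  then show ?thesis
    by simp
qed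

lemma is_ideal_sum:
  assumes J: "is_ideal S J"
  shows "finite A \<Longrightarrow> (\<And>x. x \<in> A \<Longrightarrow> f x \<in> J) \<Longrightarrow> sum f A \<in> J"
  by (induction A rule: finite_induct) (auto intro: is_ideal_zero[OF J] is_ideal_add[OF J])

lemma one_notin_prime_ideal:
  assumes "is_prime_ideal (poly_ring n) P"
  shows "1 \<notin> P"
proof
  assume "1 \<in> P"
  then have "s \<in> P" if "s \<in> poly_ring n" for s
    using assms is_ideal_mult[of "poly_ring n" P s 1] that unfolding is_prime_ideal_def by simp
  with assms show False
    unfolding is_prime_ideal_def using is_ideal_subset by blast
qed

lemma is_ideal_gen_ideal:
  assumes "X \<subseteq> poly_ring n"
  shows "is_ideal (poly_ring n) (gen_ideal (poly_ring n) X)"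
proof -
  let ?G = "gen_ideal (poly_ring n) X"
  have "poly_ring n \<in> {J. is_ideal (poly_ring n) J \<and> X \<subseteq> J}"
    using is_ideal_poly_ring assms by blast
  then have "?G \<subseteq> poly_ring n"
    unfolding gen_ideal_def by blast
  moreover have "0 \<in> ?G"
    unfolding gen_ideal_def using is_ideal_zero by blast
  moreover have "a + b \<in> ?G" if "a \<in> ?G" "b \<in> ?G" for a b
    using that unfolding gen_ideal_def using is_ideal_add by blast
  moreover have "s * a \<in> ?G" if "s \<in> poly_ring n" "a \<in> ?G" for s a
    using that unfolding gen_ideal_def using is_ideal_mult by blast
  ultimately show ?thesis
    unfolding is_ideal_def by blast
qed

lemma gen_ideal_superset: "X \<subseteq> gen_ideal S X"
  unfolding gen_ideal_def by blast

lemma gen_ideal_least: "is_ideal S J \<Longrightarrow> X \<subseteq> J \<Longrightarrow> gen_ideal S X \<subseteq> J"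
  unfolding gen_ideal_def by blast

lemma ideal_prod_subset:
  "I \<subseteq> poly_ring n \<Longrightarrow> ideal_prod (poly_ring n) I I \<subseteq> poly_ring n"
  unfolding ideal_prod_def using poly_ring_mult
  by (intro gen_ideal_least[OF is_ideal_poly_ring]) blast

lemma symb_power2_iff:
  "f \<in> symb_power2 S I \<longleftrightarrow> f \<in> S \<and> (\<forall>P\<in>min_primes S I. \<exists>s\<in>S - P. s * f \<in> ideal_prod S I I)"
  unfolding symb_power2_def by blast

lemma ideal_prod_subset_symb_power2:
  assumes "I \<subseteq> poly_ring n"
  shows "ideal_prod (poly_ring n) I I \<subseteq> symb_power2 (poly_ring n) I"
proof
  fix f
  assume f: "f \<in> ideal_prod (poly_ring n) I I"
  have "1 \<in> poly_ring n - P" if "P \<in> min_primes (poly_ring n) I" for P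
    using that poly_ring_one one_notin_prime_ideal unfolding min_primes_def by blast
  moreover have "1 * f \<in> ideal_prod (poly_ring n) I I"
    using f by simp
  ultimately show "f \<in> symb_power2 (poly_ring n) I"
    unfolding symb_power2_iff using f ideal_prod_subset[OF assms] by blast
qed

section \<open>Monomial ideals and their localizations\<close>

text \<open>For \<open>B = UNIV\<close> this is the monomial ideal generated by \<open>G\<close>; in general it is its
  contraction from the localization at the prime generated by the variables \<open>x\<^sub>k\<close>, \<open>k \<in> B\<close>.\<close>

definition mon_ideal_on :: "nat \<Rightarrow> nat set \<Rightarrow> (nat \<Rightarrow>\<^sub>0 nat) set \<Rightarrow> 'k::field mpoly set" where
  "mon_ideal_on n B G =
     {f \<in> poly_ring n. \<forall>a\<in>keys f. \<exists>g\<in>G. \<forall>k\<in>B. lookup g k \<le> lookup a k}"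

abbreviation mon_ideal :: "nat \<Rightarrow> (nat \<Rightarrow>\<^sub>0 nat) set \<Rightarrow> 'k::field mpoly set" where
  "mon_ideal n G \<equiv> mon_ideal_on n UNIV G"

lemma mon_ideal_onI:
  "f \<in> poly_ring n \<Longrightarrow> (\<And>a. a \<in> keys f \<Longrightarrow> \<exists>g\<in>G. \<forall>k\<in>B. lookup g k \<le> lookup a k)
    \<Longrightarrow> f \<in> mon_ideal_on n B G"
  unfolding mon_ideal_on_def by blast

lemma mon_ideal_onD:
  assumes "f \<in> mon_ideal_on n B G"
  shows "f \<in> poly_ring n" "a \<in> keys f \<Longrightarrow> \<exists>g\<in>G. \<forall>k\<in>B. lookup g k \<le> lookup a k"
  using assms unfolding mon_ideal_on_def by blast+

lemma is_ideal_mon_ideal_on: "is_ideal (poly_ring n) (mon_ideal_on n B G :: 'k::field mpoly set)"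
  unfolding is_ideal_def
proof (intro conjI ballI)
  show "mon_ideal_on n B G \<subseteq> poly_ring n"
    unfolding mon_ideal_on_def by blast
  show "0 \<in> mon_ideal_on n B G"
    unfolding mon_ideal_on_def using poly_ring_zero by simp
next
  fix a b :: "'k mpoly"
  assume a: "a \<in> mon_ideal_on n B G" and b: "b \<in> mon_ideal_on n B G"
  have "a + b \<in> poly_ring n"
    using a b poly_ring_add unfolding mon_ideal_on_def by blast
  moreover have "keys (a + b) \<subseteq> keys a \<union> keys b"
    by (rule keys_add)
  ultimately show "a + b \<in> mon_ideal_on n B G"
    using a b unfolding mon_ideal_on_def by blast
next
  fix s a :: "'k mpoly"
  assume s: "s \<in> poly_ring n" and a: "a \<in> mon_ideal_on n B G"
  have "\<exists>g\<in>G. \<forall>k\<in>B. lookup g k \<le> lookup c k" if "c \<in> keys (s * a)" for c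
  proof -
    obtain x y where c: "c = x + y" "y \<in> keys a"
      using \<open>c \<in> keys (s * a)\<close> keys_mult[of s a] by blast
    then obtain g where "g \<in> G" "\<forall>k\<in>B. lookup g k \<le> lookup y k"
      using a unfolding mon_ideal_on_def by blast
    then show ?thesis
      using c by (metis lookup_add trans_le_add2)
  qed
  then show "s * a \<in> mon_ideal_on n B G"
    using s a poly_ring_mult unfolding mon_ideal_on_def by blast
qed

lemma single_in_mon_ideal_on:
  assumes "g \<in> G" "\<forall>k\<in>B. lookup g k \<le> lookup a k" "keys a \<subseteq> {1..n}"
  shows "single a c \<in> mon_ideal_on n B G"
proof -
  have "single a c \<in> poly_ring n"
    using poly_ring_single assms(3) by blast
  moreover have "keys (single a c) \<subseteq> {a}"
    by simp
  ultimately show ?thesis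
    using assms(1,2) unfolding mon_ideal_on_def by blast
qed

lemma mon_ideal_subset_mon_ideal_on: "mon_ideal n G \<subseteq> mon_ideal_on n B G"
  unfolding mon_ideal_on_def by blast

lemma mon_ideal_subset_ideal:
  assumes J: "is_ideal (poly_ring n) J" and G: "\<And>g. g \<in> G \<Longrightarrow> single g (1::'k::field) \<in> J"
  shows "mon_ideal n G \<subseteq> (J :: 'k mpoly set)"
proof
  fix f :: "'k mpoly"
  assume f: "f \<in> mon_ideal n G"
  have "single a (lookup f a) \<in> J" if a: "a \<in> keys f" for a
  proof -
    obtain g where g: "g \<in> G" "\<forall>k. lookup g k \<le> lookup a k"
      using f a unfolding mon_ideal_on_def by blast
    have "keys a \<subseteq> {1..n}"
      using f a unfolding mon_ideal_on_def poly_ring_def by blast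
    then have "single (a - g) (lookup f a) \<in> poly_ring n"
      using poly_ring_single keys_diff_nat_subset[of a g] by blast
    moreover have "single a (lookup f a) = single (a - g) (lookup f a) * single g 1"
      using diff_add_cancel_nat_pointwise[of g a] g(2) by (simp add: mult_single)
    ultimately show ?thesis
      using is_ideal_mult[OF J] G g(1) by metis
  qed
  then have "(\<Sum>a\<in>keys f. single a (lookup f a)) \<in> J"
    by (intro is_ideal_sum[OF J]) auto
  then show "f \<in> J"
    by (simp add: poly_mapping_sum_single)
qed

definition restrict_keys :: "('a \<Rightarrow> bool) \<Rightarrow> ('a \<Rightarrow>\<^sub>0 'b::zero) \<Rightarrow> 'a \<Rightarrow>\<^sub>0 'b" where
  "restrict_keys Q f = Abs_poly_mapping (\<lambda>a. if Q a then lookup f a else 0)"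

lemma lookup_restrict_keys: "lookup (restrict_keys Q f) a = (if Q a then lookup f a else 0)"
proof -
  have "{a. (if Q a then lookup f a else 0) \<noteq> 0} \<subseteq> {a. lookup f a \<noteq> 0}"
    by (simp add: Collect_mono)
  then have "finite {a. (if Q a then lookup f a else 0) \<noteq> 0}"
    using finite_subset finite_lookup by blast
  then show ?thesis
    unfolding restrict_keys_def by simp
qed

lemma keys_restrict_keys: "keys (restrict_keys Q f) = {a \<in> keys f. Q a}"
  by (auto simp: in_keys_iff lookup_restrict_keys split: if_splits)

lemma restrict_keys_add_compl:
  "restrict_keys Q f + restrict_keys (\<lambda>a. \<not> Q a) f = (f :: 'a \<Rightarrow>\<^sub>0 'b::monoid_add)"
  by (rule poly_mapping_eqI) (simp add: lookup_add lookup_restrict_keys)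

lemma poly_ring_restrict_keys: "f \<in> poly_ring n \<Longrightarrow> restrict_keys Q f \<in> poly_ring n"
  unfolding poly_ring_def by (auto simp: keys_restrict_keys)

definition degree_on :: "nat set \<Rightarrow> (nat \<Rightarrow>\<^sub>0 nat) \<Rightarrow> nat" where
  "degree_on B a = (\<Sum>k\<in>B. lookup a k)"

lemma degree_on_add: "degree_on B (a + b) = degree_on B a + degree_on B b"
  unfolding degree_on_def by (simp add: lookup_add sum.distrib)

lemma degree_on_eq_0_iff: "finite B \<Longrightarrow> degree_on B a = 0 \<longleftrightarrow> (\<forall>k\<in>B. lookup a k = 0)"
  unfolding degree_on_def by simp

lemma degree_on_keys_mult_ge:
  fixes s f :: "(nat \<Rightarrow>\<^sub>0 nat) \<Rightarrow>\<^sub>0 'b::semiring_0"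
  assumes "\<And>x. x \<in> keys s \<Longrightarrow> a \<le> degree_on B x" "\<And>y. y \<in> keys f \<Longrightarrow> b \<le> degree_on B y"
    and "z \<in> keys (s * f)"
  shows "a + b \<le> degree_on B z"
proof -
  obtain x y where "z = x + y" "x \<in> keys s" "y \<in> keys f"
    using keys_mult[of s f] assms(3) by blast
  then show ?thesis
    using assms(1,2) degree_on_add[of B x y] by (simp add: add_mono)
qed

text \<open>The parts of \<open>s\<close> and \<open>f\<close> of lowest degree in the variables \<open>B\<close> multiply to a nonzero
  polynomial, and no other product of terms can cancel its monomials.\<close>

lemma keys_mult_with_free_factor:
  fixes s f :: "'k::field mpoly"
  assumes B: "finite B" and f: "f \<noteq> 0" and s: "\<exists>x\<in>keys s. \<forall>k\<in>B. lookup x k = 0"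
  shows "\<exists>x y. (\<forall>k\<in>B. lookup x k = 0) \<and> y \<in> keys f \<and> x + y \<in> keys (s * f)"
proof -
  define d where "d = Min (degree_on B ` keys f)"
  have d_le: "d \<le> degree_on B y" if "y \<in> keys f" for y
    unfolding d_def using that by simp
  have "d \<in> degree_on B ` keys f"
    unfolding d_def using f by (intro Min_in) auto
  then obtain y0 where y0: "y0 \<in> keys f" "degree_on B y0 = d"
    by blast
  obtain x0 where x0: "x0 \<in> keys s" "degree_on B x0 = 0"
    using s degree_on_eq_0_iff[OF B] by blast
  define f0 where "f0 = restrict_keys (\<lambda>a. degree_on B a = d) f"
  define f1 where "f1 = restrict_keys (\<lambda>a. degree_on B a \<noteq> d) f"
  define s0 where "s0 = restrict_keys (\<lambda>a. degree_on B a = 0) s"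
  define s1 where "s1 = restrict_keys (\<lambda>a. degree_on B a \<noteq> 0) s"
  have "x0 \<in> keys s0" "y0 \<in> keys f0"
    using x0 y0 unfolding s0_def f0_def by (simp_all add: keys_restrict_keys)
  then have "s0 * f0 \<noteq> 0"
    by auto
  then obtain c where c: "c \<in> keys (s0 * f0)"
    by fastforce
  then obtain x y where xy: "c = x + y" "x \<in> keys s0" "y \<in> keys f0"
    using keys_mult[of s0 f0] by blast
  have x: "degree_on B x = 0" and y: "y \<in> keys f" "degree_on B y = d"
    using xy(2,3) unfolding s0_def f0_def by (simp_all add: keys_restrict_keys)
  have "Suc d \<le> degree_on B y'" if "y' \<in> keys f1" for y'
    using that d_le unfolding f1_def keys_restrict_keys by fastforce
  then have "0 + Suc d \<le> degree_on B z" if "z \<in> keys (s0 * f1)" for z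
    using degree_on_keys_mult_ge that by blast
  moreover have "1 \<le> degree_on B x'" if "x' \<in> keys s1" for x'
    using that unfolding s1_def keys_restrict_keys by auto
  then have "1 + d \<le> degree_on B z" if "z \<in> keys (s1 * f)" for z
    using degree_on_keys_mult_ge d_le that by blast
  moreover have "degree_on B c = d"
    using xy(1) x y(2) degree_on_add[of B x y] by simp
  ultimately have "c \<notin> keys (s0 * f1 + s1 * f)"
    using keys_add[of "s0 * f1" "s1 * f"] by fastforce
  moreover have "s * f = s0 * f0 + (s0 * f1 + s1 * f)"
  proof -
    have "s = s0 + s1"
      unfolding s0_def s1_def by (rule restrict_keys_add_compl[symmetric])
    moreover have "f = f0 + f1"
      unfolding f0_def f1_def by (rule restrict_keys_add_compl[symmetric])
    ultimately show ?thesis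
      by (simp add: algebra_simps)
  qed
  ultimately have "c \<in> keys (s * f)"
    using c by (simp add: in_keys_iff lookup_add)
  then show ?thesis
    using x xy(1) y(1) degree_on_eq_0_iff[OF B] by blast
qed

lemma mon_ideal_on_cancel:
  fixes s f :: "'k::field mpoly"
  assumes B: "finite B" and s: "s \<in> poly_ring n" and f: "f \<in> poly_ring n"
    and free: "\<exists>x\<in>keys s. \<forall>k\<in>B. lookup x k = 0"
    and sf: "s * f \<in> mon_ideal_on n B G"
  shows "f \<in> mon_ideal_on n B G"
proof (rule ccontr)
  define good where "good a \<longleftrightarrow> (\<exists>g\<in>G. \<forall>k\<in>B. lookup g k \<le> lookup a k)" for a
  let ?J = "mon_ideal_on n B G :: 'k mpoly set"
  have J: "is_ideal (poly_ring n) ?J"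
    by (rule is_ideal_mon_ideal_on)
  have memJ: "h \<in> ?J \<longleftrightarrow> h \<in> poly_ring n \<and> (\<forall>a\<in>keys h. good a)" for h
    unfolding mon_ideal_on_def good_def by blast
  define f1 where "f1 = restrict_keys (\<lambda>a. \<not> good a) f"
  assume "f \<notin> ?J"
  then obtain a where "a \<in> keys f" "\<not> good a"
    using f memJ by blast
  then have "a \<in> keys f1"
    unfolding f1_def by (simp add: keys_restrict_keys)
  then have "f1 \<noteq> 0"
    by auto
  have "f - f1 = restrict_keys good f"
    using restrict_keys_add_compl[of good f] unfolding f1_def by (simp add: algebra_simps)
  then have "f - f1 \<in> ?J"
    using memJ poly_ring_restrict_keys[OF f] by (simp add: keys_restrict_keys)
  then have "s * f - s * (f - f1) \<in> ?J"
    using is_ideal_diff[OF J sf] is_ideal_mult[OF J s] by blast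
  then have "s * f1 \<in> ?J"
    by (simp add: algebra_simps)
  obtain x y where xy: "\<forall>k\<in>B. lookup x k = 0" "y \<in> keys f1" "x + y \<in> keys (s * f1)"
    using keys_mult_with_free_factor[OF B \<open>f1 \<noteq> 0\<close> free] by blast
  have "good (x + y)"
    using \<open>s * f1 \<in> ?J\<close> xy(3) memJ by blast
  then have "good y"
    using xy(1) unfolding good_def by (simp add: lookup_add)
  then show False
    using xy(2) unfolding f1_def by (simp add: keys_restrict_keys)
qed

section \<open>Primes generated by variables\<close>

definition var :: "nat \<Rightarrow> 'k::field mpoly" where
  "var k = single (single k 1) 1"

definition var_prime :: "nat \<Rightarrow> nat set \<Rightarrow> 'k::field mpoly set" where
  "var_prime n B = {f \<in> poly_ring n. \<forall>a\<in>keys f. \<exists>k\<in>B. lookup a k \<noteq> 0}"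

definition var_exps :: "nat set \<Rightarrow> (nat \<Rightarrow>\<^sub>0 nat) set" where
  "var_exps B = {single k 1 | k. k \<in> B}"

lemma var_prime_eq_mon_ideal_on:
  assumes "B \<subseteq> B'"
  shows "var_prime n B = mon_ideal_on n B' (var_exps B)"
proof -
  have "(\<exists>g\<in>var_exps B. \<forall>k\<in>B'. lookup g k \<le> lookup a k) \<longleftrightarrow> (\<exists>k\<in>B. lookup a k \<noteq> 0)"
    for a :: "nat \<Rightarrow>\<^sub>0 nat"
  proof
    assume "\<exists>g\<in>var_exps B. \<forall>k\<in>B'. lookup g k \<le> lookup a k"
    then obtain k where k: "k \<in> B" "\<forall>k'\<in>B'. lookup (single k 1) k' \<le> lookup a k'"
      unfolding var_exps_def by blast
    then have "lookup (single k 1) k \<le> lookup a k"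
      using assms by blast
    then have "1 \<le> lookup a k"
      by simp
    then show "\<exists>k\<in>B. lookup a k \<noteq> 0"
      using k(1) by force
  next
    assume "\<exists>k\<in>B. lookup a k \<noteq> 0"
    then obtain k where k: "k \<in> B" "lookup a k \<noteq> 0"
      by blast
    then have "\<forall>k'\<in>B'. lookup (single k 1) k' \<le> lookup a k'"
      by (simp add: lookup_single when_def)
    then show "\<exists>g\<in>var_exps B. \<forall>k\<in>B'. lookup g k \<le> lookup a k"
      using k(1) unfolding var_exps_def by blast
  qed
  then show ?thesis
    unfolding var_prime_def mon_ideal_on_def by blast
qed

lemma is_prime_var_prime:
  assumes "finite B"
  shows "is_prime_ideal (poly_ring n) (var_prime n B :: 'k::field mpoly set)"
proof -
  have B: "var_prime n B = mon_ideal_on n B (var_exps B)"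
    by (rule var_prime_eq_mon_ideal_on) simp
  have ideal: "is_ideal (poly_ring n) (var_prime n B :: 'k mpoly set)"
    unfolding B by (rule is_ideal_mon_ideal_on)
  have "(1::'k mpoly) \<notin> var_prime n B"
    unfolding var_prime_def by simp
  then have proper: "var_prime n B \<noteq> (poly_ring n :: 'k mpoly set)"
    using poly_ring_one by blast
  have prime: "a \<in> var_prime n B \<or> b \<in> var_prime n B"
    if a: "a \<in> poly_ring n" and b: "b \<in> poly_ring n" and ab: "a * b \<in> var_prime n B"
    for a b :: "'k mpoly"
  proof (cases "a \<in> var_prime n B")
    case False
    then have "\<exists>x\<in>keys a. \<forall>k\<in>B. lookup x k = 0"
      using a unfolding var_prime_def by blast
    then have "b \<in> mon_ideal_on n B (var_exps B)"
      using mon_ideal_on_cancel[OF assms a b] ab unfolding B by blast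
    then show ?thesis
      unfolding B by blast
  qed simp
  show ?thesis
    unfolding is_prime_ideal_def using ideal proper prime by blast
qed

lemma var_notin_var_prime:
  assumes "l \<notin> B"
  shows "(var l :: 'k::field mpoly) \<notin> var_prime n B"
proof
  assume "(var l :: 'k mpoly) \<in> var_prime n B"
  then obtain k where "k \<in> B" "lookup (single l (1::nat)) k \<noteq> 0"
    unfolding var_prime_def var_def by auto
  then show False
    using assms by (auto simp: lookup_single when_def split: if_splits)
qed

lemma mon_ideal_subset_var_prime:
  assumes "\<And>g. g \<in> G \<Longrightarrow> \<exists>k\<in>B. lookup g k \<noteq> 0"
  shows "mon_ideal n G \<subseteq> var_prime n B"
proof
  fix f
  assume f: "f \<in> mon_ideal n G"
  have "\<exists>k\<in>B. lookup a k \<noteq> 0" if a: "a \<in> keys f" for a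
  proof -
    obtain g where g: "g \<in> G" "\<forall>k. lookup g k \<le> lookup a k"
      using f a unfolding mon_ideal_on_def by blast
    then obtain k where "k \<in> B" "lookup g k \<noteq> 0"
      using assms by blast
    then show ?thesis
      using g(2) by (metis le_zero_eq)
  qed
  then show "f \<in> var_prime n B"
    using f unfolding mon_ideal_on_def var_prime_def by blast
qed

lemma var_prime_subset_ideal:
  assumes J: "is_ideal (poly_ring n) J" and vars: "\<And>k. k \<in> B \<Longrightarrow> var k \<in> J"
  shows "var_prime n B \<subseteq> J"
  unfolding var_prime_eq_mon_ideal_on[OF subset_UNIV]
  by (rule mon_ideal_subset_ideal[OF J]) (use vars in \<open>auto simp: var_exps_def var_def\<close>)

lemma degree_on_single: "finite B \<Longrightarrow> k \<in> B \<Longrightarrow> degree_on B (single k c) = c"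
  unfolding degree_on_def by (simp add: lookup_single when_def sum.delta')

lemma prime_ideal_var_of_monomial:
  fixes P :: "'k::field mpoly set"
  assumes P: "is_prime_ideal (poly_ring n) P"
  shows "keys a \<subseteq> {1..n} \<Longrightarrow> single a 1 \<in> P \<Longrightarrow> \<exists>k\<in>keys a. var k \<in> P"
proof (induction "degree_on {1..n} a" arbitrary: a rule: less_induct)
  case less
  show ?case
  proof (cases "a = 0")
    case True
    then show ?thesis
      using less.prems(2) one_notin_prime_ideal[OF P] by simp
  next
    case False
    then obtain k where k: "k \<in> keys a"
      by fastforce
    define b where "b = a - single k 1"
    have "\<And>k'. lookup (single k 1) k' \<le> lookup a k'"
      using k by (auto simp: lookup_single when_def in_keys_iff)
    then have ab: "a = b + single k 1"
      unfolding b_def using diff_add_cancel_nat_pointwise[of "single k 1" a] by simp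
    have kb: "keys b \<subseteq> keys a"
      unfolding b_def by (rule keys_diff_nat_subset)
    have kn: "k \<in> {1..n}"
      using k less.prems(1) by blast
    have "single a (1::'k) = single b 1 * var k"
      unfolding var_def by (simp add: mult_single ab)
    moreover have "single b (1::'k) \<in> poly_ring n"
      using poly_ring_single kb less.prems(1) by blast
    moreover have "var k \<in> (poly_ring n :: 'k mpoly set)"
      unfolding var_def using kn by (intro poly_ring_single) auto
    ultimately have "single b (1::'k) \<in> P \<or> var k \<in> P"
      using P less.prems(2) unfolding is_prime_ideal_def by metis
    then show ?thesis
    proof
      assume "single b 1 \<in> P"
      moreover have "degree_on {1..n} b < degree_on {1..n} a"
        using ab degree_on_add[of "{1..n}" b "single k 1"] degree_on_single[OF _ kn] by simp
      ultimately show ?thesis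
        using less.hyps kb less.prems(1) by blast
    next
      assume "var k \<in> P"
      then show ?thesis
        using k by blast
    qed
  qed
qed

section \<open>The edge ideal of a whiskered graph\<close>

locale whiskered_graph =
  fixes m :: nat and EH :: "nat set set" and w :: "nat \<Rightarrow> nat \<Rightarrow> nat"
  assumes H_simple: "\<forall>e\<in>EH. \<exists>i j. e = {i, j} \<and> i \<noteq> j \<and> i \<in> {1..m} \<and> j \<in> {1..m}"
    and w_pos: "\<forall>i j. {i, j} \<in> whiskered m EH \<and> i \<noteq> j \<longrightarrow> w i j \<ge> 1"
    and tri_free: "triangle_free (whiskered m EH)"
begin

abbreviation "W \<equiv> whiskered m EH"
abbreviation "V \<equiv> {1..m}"

abbreviation S :: "'k::field mpoly set" where
  "S \<equiv> poly_ring (2*m)"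

definition edge_exp :: "nat \<Rightarrow> nat \<Rightarrow> nat \<Rightarrow>\<^sub>0 nat" where
  "edge_exp x y = single x (w x y) + single y (w y x)"

definition edge_exps :: "(nat \<Rightarrow>\<^sub>0 nat) set" where
  "edge_exps = {edge_exp x y | x y. {x, y} \<in> W}"

abbreviation edge_ideal :: "'k::field mpoly set" where
  "edge_ideal \<equiv> mon_ideal (2*m) edge_exps"

definition edge_exp_sums :: "(nat \<Rightarrow>\<^sub>0 nat) set" where
  "edge_exp_sums = {g + h | g h. g \<in> edge_exps \<and> h \<in> edge_exps}"

definition weight_condition :: bool where
  "weight_condition \<longleftrightarrow> (\<forall>i j. {i, j} \<in> EH \<longrightarrow>
       (w i (m + i) = w i j \<and> w j (m + j) = w j i) \<or>
       (w i (m + i) \<ge> 2 * w i j \<and> w j (m + j) \<ge> 2 * w j i))"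

lemma lookup_edge_exp:
  "lookup (edge_exp x y) k = (if k = x then w x y else 0) + (if k = y then w y x else 0)"
  unfolding edge_exp_def by (simp add: lookup_add lookup_single when_def)

lemma edge_exp_commute: "edge_exp x y = edge_exp y x"
  unfolding edge_exp_def by (simp add: add.commute)

lemma H_edgeD:
  assumes "{x, y} \<in> EH"
  shows "x \<noteq> y \<and> x \<in> V \<and> y \<in> V"
proof -
  obtain i j where "{x, y} = {i, j}" "i \<noteq> j" "i \<in> V" "j \<in> V"
    using H_simple assms by blast
  then show ?thesis
    by (metis doubleton_eq_iff)
qed

lemma whiskered_iff:
  "{x, y} \<in> W \<longleftrightarrow> {x, y} \<in> EH \<or> (\<exists>i\<in>V. (x = i \<and> y = m + i) \<or> (x = m + i \<and> y = i))"
  unfolding whiskered_def by (auto simp: doubleton_eq_iff)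

lemma whiskered_cases:
  assumes "{x, y} \<in> W"
  obtains "{x, y} \<in> EH" "x \<noteq> y" "x \<in> V" "y \<in> V"
    | i where "i \<in> V" "x = i" "y = m + i"
    | i where "i \<in> V" "x = m + i" "y = i"
  using assms whiskered_iff H_edgeD by metis

lemma whiskered_neq: "{x, y} \<in> W \<Longrightarrow> x \<noteq> y"
  by (erule whiskered_cases) auto

lemma whiskered_range: "{x, y} \<in> W \<Longrightarrow> x \<in> {1..2*m} \<and> y \<in> {1..2*m}"
  by (erule whiskered_cases) auto

lemma whiskered_at_base: "{l, y} \<in> W \<Longrightarrow> l \<in> V \<Longrightarrow> y = m + l \<or> {l, y} \<in> EH"
  by (erule whiskered_cases) auto

lemma whiskered_at_whisker: "{m + i, y} \<in> W \<Longrightarrow> i \<in> V \<Longrightarrow> y = i"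
  by (erule whiskered_cases) auto

lemma whiskered_commute: "{x, y} \<in> W \<Longrightarrow> {y, x} \<in> W"
  by (simp add: insert_commute)

lemma whisker_in_whiskered: "i \<in> V \<Longrightarrow> {i, m + i} \<in> W"
  using whiskered_iff by blast

lemma H_edge_in_whiskered: "{x, y} \<in> EH \<Longrightarrow> {x, y} \<in> W"
  using whiskered_iff by blast

lemma weight_pos: "{x, y} \<in> W \<Longrightarrow> 1 \<le> w x y"
  using w_pos whiskered_neq by blast

lemma keys_edge_exp:
  assumes "{x, y} \<in> W"
  shows "keys (edge_exp x y) = {x, y}"
proof -
  have "1 \<le> w x y" "1 \<le> w y x"
    using weight_pos assms whiskered_commute by blast+
  then show ?thesis
    using whiskered_neq[OF assms] by (auto simp: in_keys_iff lookup_edge_exp split: if_splits)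
qed

lemma keys_edge_exp_subset: "{x, y} \<in> W \<Longrightarrow> keys (edge_exp x y) \<subseteq> {1..2*m}"
  using keys_edge_exp whiskered_range by simp

lemma edge_exp_in_edge_exps: "{x, y} \<in> W \<Longrightarrow> edge_exp x y \<in> edge_exps"
  unfolding edge_exps_def by blast

lemma keys_edge_exp_sums_subset:
  assumes "g \<in> edge_exp_sums"
  shows "keys g \<subseteq> {1..2*m}"
proof -
  obtain x y x' y' where "g = edge_exp x y + edge_exp x' y'" "{x, y} \<in> W" "{x', y'} \<in> W"
    using assms unfolding edge_exp_sums_def edge_exps_def by blast
  then show ?thesis
    using keys_edge_exp_subset keys_add_nat[of "edge_exp x y" "edge_exp x' y'"] by auto
qed

lemma lookup_whisker_exp:
  assumes "i \<in> V"
  shows "lookup (edge_exp i (m + i)) i = w i (m + i)"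
    "lookup (edge_exp i (m + i)) (m + i) = w (m + i) i"
    "k \<noteq> i \<Longrightarrow> k \<noteq> m + i \<Longrightarrow> lookup (edge_exp i (m + i)) k = 0"
  using assms by (auto simp: lookup_edge_exp)

lemma lookup_H_edge_exp:
  assumes "{i, l} \<in> EH"
  shows "lookup (edge_exp i l) i = w i l" "lookup (edge_exp i l) l = w l i"
    "k \<noteq> i \<Longrightarrow> k \<noteq> l \<Longrightarrow> lookup (edge_exp i l) k = 0"
  using H_edgeD[OF assms] by (auto simp: lookup_edge_exp)

lemma edge_exp_at_whisker:
  assumes "i \<in> V" "{x, y} \<in> W" "0 < lookup (edge_exp x y) (m + i)"
  shows "edge_exp x y = edge_exp i (m + i)"
proof -
  have "m + i = x \<or> m + i = y"
    using assms(3) by (simp add: lookup_edge_exp split: if_splits)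
  then show ?thesis
  proof
    assume "m + i = x"
    then have "y = i"
      using whiskered_at_whisker assms(1,2) by blast
    then show ?thesis
      using \<open>m + i = x\<close> edge_exp_commute by simp
  next
    assume "m + i = y"
    then have "x = i"
      using whiskered_at_whisker whiskered_commute assms(1,2) by blast
    then show ?thesis
      using \<open>m + i = y\<close> by simp
  qed
qed

lemma single_edge_exp_in_mon_ideal_on:
  assumes "g \<in> edge_exps"
  shows "single g c \<in> mon_ideal_on (2*m) B edge_exps"
proof -
  obtain x y where "g = edge_exp x y" "{x, y} \<in> W"
    using assms unfolding edge_exps_def by blast
  then show ?thesis
    using single_in_mon_ideal_on[OF assms, of B g "2*m" c] keys_edge_exp_subset by simp
qed

lemma generators_eq:
  "{mono2 i (w i j) j (w j i) | i j. i < j \<and> {i, j} \<in> W} = (\<lambda>g. single g (1::'k::field)) ` edge_exps"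
proof
  show "{mono2 i (w i j) j (w j i) | i j. i < j \<and> {i, j} \<in> W} \<subseteq> (\<lambda>g. single g (1::'k)) ` edge_exps"
    unfolding mono2_def edge_exps_def edge_exp_def by blast
next
  show "(\<lambda>g. single g (1::'k)) ` edge_exps \<subseteq> {mono2 i (w i j) j (w j i) | i j. i < j \<and> {i, j} \<in> W}"
  proof
    fix p :: "'k mpoly"
    assume "p \<in> (\<lambda>g. single g 1) ` edge_exps"
    then obtain x y where xy: "p = single (edge_exp x y) 1" "{x, y} \<in> W"
      unfolding edge_exps_def by blast
    have "p = mono2 x (w x y) y (w y x)" "p = mono2 y (w y x) x (w x y)"
      using xy(1) edge_exp_commute[of x y] unfolding mono2_def edge_exp_def by simp_all
    moreover have "x < y \<or> y < x"
      using whiskered_neq[OF xy(2)] by arith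
    ultimately show "p \<in> {mono2 i (w i j) j (w j i) | i j. i < j \<and> {i, j} \<in> W}"
      using xy(2) whiskered_commute by blast
  qed
qed

lemma gen_ideal_eq_edge_ideal:
  "gen_ideal S ((\<lambda>g. single g (1::'k::field)) ` edge_exps) = edge_ideal"
  (is "gen_ideal _ ?X = _")
proof
  have X: "?X \<subseteq> edge_ideal"
    by (auto intro: single_edge_exp_in_mon_ideal_on)
  then show "gen_ideal S ?X \<subseteq> edge_ideal"
    by (intro gen_ideal_least is_ideal_mon_ideal_on)
  have "?X \<subseteq> S"
    using X mon_ideal_onD(1) by blast
  then show "edge_ideal \<subseteq> gen_ideal S ?X"
  proof (intro mon_ideal_subset_ideal is_ideal_gen_ideal)
    fix g
    assume "g \<in> edge_exps"
    then have "single g 1 \<in> ?X"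
      by blast
    then show "single g 1 \<in> gen_ideal S ?X"
      using gen_ideal_superset[of ?X S] by blast
  qed
qed

lemma ideal_prod_edge_ideal_eq:
  "ideal_prod S edge_ideal edge_ideal
     = (mon_ideal (2*m) edge_exp_sums :: 'k::field mpoly set)"
  (is "ideal_prod _ ?I ?I = _")
proof
  have "a * b \<in> mon_ideal (2*m) edge_exp_sums" if a: "a \<in> ?I" and b: "b \<in> ?I" for a b
  proof (rule mon_ideal_onI)
    show "a * b \<in> S"
      using poly_ring_mult mon_ideal_onD(1)[OF a] mon_ideal_onD(1)[OF b] by blast
    fix c
    assume "c \<in> keys (a * b)"
    then obtain x y where xy: "c = x + y" "x \<in> keys a" "y \<in> keys b"
      using keys_mult[of a b] by blast
    obtain g where g: "g \<in> edge_exps" "\<forall>k. lookup g k \<le> lookup x k"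
      using mon_ideal_onD(2)[OF a xy(2)] by blast
    obtain h where h: "h \<in> edge_exps" "\<forall>k. lookup h k \<le> lookup y k"
      using mon_ideal_onD(2)[OF b xy(3)] by blast
    have "g + h \<in> edge_exp_sums"
      unfolding edge_exp_sums_def using g(1) h(1) by blast
    moreover have "\<forall>k. lookup (g + h) k \<le> lookup c k"
      using g(2) h(2) xy(1) by (simp add: lookup_add add_mono)
    ultimately show "\<exists>g\<in>edge_exp_sums. \<forall>k\<in>UNIV. lookup g k \<le> lookup c k"
      by blast
  qed
  then have "{a * b |a b. a \<in> ?I \<and> b \<in> ?I} \<subseteq> mon_ideal (2*m) edge_exp_sums"
    by blast
  then show "ideal_prod S ?I ?I \<subseteq> mon_ideal (2*m) edge_exp_sums"
    unfolding ideal_prod_def by (intro gen_ideal_least is_ideal_mon_ideal_on)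
next
  have "{a * b |a b. a \<in> ?I \<and> b \<in> ?I} \<subseteq> S"
    by (auto intro!: poly_ring_mult dest: mon_ideal_onD(1))
  then have J: "is_ideal S (ideal_prod S ?I ?I)"
    unfolding ideal_prod_def by (rule is_ideal_gen_ideal)
  show "mon_ideal (2*m) edge_exp_sums \<subseteq> ideal_prod S ?I ?I"
  proof (rule mon_ideal_subset_ideal[OF J])
    fix gh
    assume "gh \<in> edge_exp_sums"
    then obtain g h where gh: "gh = g + h" "g \<in> edge_exps" "h \<in> edge_exps"
      unfolding edge_exp_sums_def by blast
    have "single gh (1::'k) = single g 1 * single h 1"
      using gh(1) by (simp add: mult_single)
    moreover have "single g (1::'k) \<in> ?I" "single h (1::'k) \<in> ?I"
      using single_edge_exp_in_mon_ideal_on gh(2,3) by blast+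
    ultimately have "single gh (1::'k) \<in> {a * b |a b. a \<in> ?I \<and> b \<in> ?I}"
      by (intro CollectI exI[of _ "single g 1"] exI[of _ "single h 1"]) simp
    then show "single gh (1::'k) \<in> ideal_prod S ?I ?I"
      unfolding ideal_prod_def by (rule gen_ideal_superset[THEN subsetD])
  qed
qed

section \<open>Minimal primes of the edge ideal\<close>

definition H_vertex_cover :: "nat set \<Rightarrow> bool" where
  "H_vertex_cover T \<longleftrightarrow> (\<forall>x y. {x, y} \<in> EH \<longrightarrow> x \<in> T \<or> y \<in> T)"

text \<open>For a vertex cover \<open>T\<close> of \<open>H\<close>, \<open>cover_set (V - T) T = T \<union> {m + i | i. i \<in> V - T}\<close> is a
  minimal vertex cover of \<open>W\<close>.\<close>

definition cover_set :: "nat set \<Rightarrow> nat set \<Rightarrow> nat set" where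
  "cover_set R K = (V - R) \<union> (\<lambda>i. m + i) ` (V - K)"

lemma prime_edge_var:
  assumes P: "is_prime_ideal S P" "edge_ideal \<subseteq> P" and xy: "{x, y} \<in> W"
  shows "var x \<in> P \<or> var y \<in> P"
proof -
  have "single (edge_exp x y) 1 \<in> P"
    using single_edge_exp_in_mon_ideal_on[OF edge_exp_in_edge_exps[OF xy]] P(2) by blast
  then obtain z where "z \<in> keys (edge_exp x y)" "var z \<in> P"
    using prime_ideal_var_of_monomial[OF P(1) keys_edge_exp_subset[OF xy]] by blast
  then show ?thesis
    using keys_edge_exp[OF xy] by auto
qed

lemma edge_ideal_subset_var_prime:
  assumes "\<And>x y. {x, y} \<in> W \<Longrightarrow> x \<in> C \<or> y \<in> C"
  shows "edge_ideal \<subseteq> var_prime (2*m) C"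
proof (rule mon_ideal_subset_var_prime)
  fix g
  assume "g \<in> edge_exps"
  then obtain x y where "g = edge_exp x y" "{x, y} \<in> W"
    unfolding edge_exps_def by blast
  then show "\<exists>k\<in>C. lookup g k \<noteq> 0"
    using assms keys_edge_exp by (metis in_keys_iff insertCI)
qed

lemma cover_set_base_iff: "i \<in> V \<Longrightarrow> i \<in> cover_set R K \<longleftrightarrow> i \<notin> R"
  unfolding cover_set_def by auto

lemma cover_set_whisker_iff: "i \<in> V \<Longrightarrow> m + i \<in> cover_set R K \<longleftrightarrow> i \<notin> K"
  unfolding cover_set_def by auto

lemma finite_cover_set: "finite (cover_set R K)"
  unfolding cover_set_def by simp

lemma cover_set_vertex_cover:
  assumes T: "T \<subseteq> V" "H_vertex_cover T" and xy: "{x, y} \<in> W"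
  shows "x \<in> cover_set (V - T) T \<or> y \<in> cover_set (V - T) T"
  using xy
proof (cases rule: whiskered_cases)
  case 1
  then show ?thesis
    using T cover_set_base_iff unfolding H_vertex_cover_def by blast
next
  case (2 i)
  then show ?thesis
    using cover_set_base_iff cover_set_whisker_iff by blast
next
  case (3 i)
  then show ?thesis
    using cover_set_base_iff cover_set_whisker_iff by blast
qed

lemma cover_set_minimal:
  assumes T: "T \<subseteq> V" and k: "k \<in> cover_set (V - T) T"
  obtains l where "{k, l} \<in> W" "l \<notin> cover_set (V - T) T"
proof -
  consider (base) "k \<in> T" | (whisker) i where "i \<in> V" "i \<notin> T" "k = m + i"
    using k T unfolding cover_set_def by blast
  then show ?thesis
  proof cases
    case base
    then show ?thesis
      using that T whisker_in_whiskered cover_set_whisker_iff by blast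
  next
    case whisker
    then show ?thesis
      using that whisker_in_whiskered[of i] whiskered_commute cover_set_base_iff by blast
  qed
qed

lemma var_prime_cover_set_in_min_primes:
  assumes T: "T \<subseteq> V" "H_vertex_cover T"
  shows "var_prime (2*m) (cover_set (V - T) T) \<in> min_primes S (edge_ideal :: 'k::field mpoly set)"
proof -
  let ?C = "cover_set (V - T) T"
  let ?P = "var_prime (2*m) ?C :: 'k mpoly set"
  have prime: "is_prime_ideal S ?P"
    by (rule is_prime_var_prime[OF finite_cover_set])
  have IP: "edge_ideal \<subseteq> ?P"
    using edge_ideal_subset_var_prime cover_set_vertex_cover[OF T] by blast
  have "?P \<subseteq> Q" if Q: "is_prime_ideal S Q" "edge_ideal \<subseteq> Q" "Q \<subseteq> ?P" for Q
  proof (rule var_prime_subset_ideal)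
    show "is_ideal S Q"
      using Q(1) unfolding is_prime_ideal_def by blast
    fix k
    assume "k \<in> ?C"
    then obtain l where l: "{k, l} \<in> W" "l \<notin> ?C"
      using cover_set_minimal[OF T(1)] by blast
    have "var l \<notin> Q"
      using var_notin_var_prime[OF l(2)] Q(3) by blast
    then show "var k \<in> Q"
      using prime_edge_var[OF Q(1,2) l(1)] by blast
  qed
  then show ?thesis
    unfolding min_primes_def using prime IP by blast
qed

text \<open>Otherwise dropping \<open>x\<^sub>m\<^sub>+\<^sub>i\<close> from the variables of \<open>P\<close> would give a smaller prime
  containing \<open>I\<close>, as the only edge at \<open>m + i\<close> is already covered by \<open>i\<close>.\<close>

lemma min_prime_not_both_whisker_vars:
  assumes P: "P \<in> min_primes S (edge_ideal :: 'k::field mpoly set)" and i: "i \<in> V"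
  shows "var i \<notin> P \<or> var (m + i) \<notin> P"
proof (rule ccontr)
  assume "\<not> ?thesis"
  then have both: "var i \<in> P" "var (m + i) \<in> P"
    by auto
  have Pp: "is_prime_ideal S P" and IP: "edge_ideal \<subseteq> P"
    and Pmin: "\<And>Q. is_prime_ideal S Q \<Longrightarrow> edge_ideal \<subseteq> Q \<Longrightarrow> Q \<subseteq> P \<Longrightarrow> Q = P"
    using P unfolding min_primes_def by blast+
  define C where "C = {k \<in> {1..2*m}. var k \<in> P} - {m + i}"
  have iC: "i \<in> C"
    unfolding C_def using both i by auto
  have C_meets: "x \<in> C \<or> y \<in> C" if xy: "{x, y} \<in> W" and "var x \<in> P" for x y
  proof (cases "x = m + i")
    case True
    then show ?thesis
      using whiskered_at_whisker[OF _ i] xy iC by blast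
  next
    case False
    then show ?thesis
      using whiskered_range[OF xy] \<open>var x \<in> P\<close> unfolding C_def by blast
  qed
  have "edge_ideal \<subseteq> var_prime (2*m) C"
    using edge_ideal_subset_var_prime C_meets prime_edge_var[OF Pp IP] whiskered_commute by metis
  moreover have "var_prime (2*m) C \<subseteq> P"
    using Pp var_prime_subset_ideal[of "2*m" P C] unfolding is_prime_ideal_def C_def by blast
  moreover have "is_prime_ideal S (var_prime (2*m) C :: 'k mpoly set)"
    unfolding C_def by (rule is_prime_var_prime) simp
  ultimately have "var_prime (2*m) C = P"
    using Pmin by blast
  moreover have "var (m + i) \<notin> (var_prime (2*m) C :: 'k mpoly set)"
    by (rule var_notin_var_prime) (simp add: C_def)
  ultimately show False
    using both by blast
qed

section \<open>Gluing local memberships in the square\<close>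

text \<open>The monomial \<open>x\<^sup>u\<close> lies in the localization of \<open>I\<^sup>2\<close> at the prime generated by the
  variables \<open>x\<^sub>k\<close>, \<open>k \<in> C\<close> (see \<open>in_square_at_iff\<close> below).\<close>

definition in_square_at :: "nat set \<Rightarrow> (nat \<Rightarrow> nat) \<Rightarrow> bool" where
  "in_square_at C u \<longleftrightarrow> (\<exists>x y x' y'. {x, y} \<in> W \<and> {x', y'} \<in> W \<and>
     (\<forall>k\<in>C. lookup (edge_exp x y) k + lookup (edge_exp x' y') k \<le> u k))"

definition nbrs :: "nat \<Rightarrow> nat set" where
  "nbrs i = {l. {i, l} \<in> EH}"

lemma in_square_atI:
  "{x, y} \<in> W \<Longrightarrow> {x', y'} \<in> W \<Longrightarrow>
    (\<And>k. k \<in> C \<Longrightarrow> lookup (edge_exp x y) k + lookup (edge_exp x' y') k \<le> u k) \<Longrightarrow>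
    in_square_at C u"
  unfolding in_square_at_def by blast

lemma in_square_atE:
  assumes "in_square_at C u"
  obtains x y x' y' where "{x, y} \<in> W" "{x', y'} \<in> W"
    "\<And>k. k \<in> C \<Longrightarrow> lookup (edge_exp x y) k + lookup (edge_exp x' y') k \<le> u k"
  using assms unfolding in_square_at_def by blast

lemma in_square_at_iff:
  "in_square_at C u \<longleftrightarrow> (\<exists>g\<in>edge_exp_sums. \<forall>k\<in>C. lookup g k \<le> u k)"
proof
  assume "in_square_at C u"
  then obtain x y x' y' where p: "{x, y} \<in> W" "{x', y'} \<in> W"
    "\<And>k. k \<in> C \<Longrightarrow> lookup (edge_exp x y) k + lookup (edge_exp x' y') k \<le> u k"
    by (rule in_square_atE) (rule that)
  have "edge_exp x y + edge_exp x' y' \<in> edge_exp_sums"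
    unfolding edge_exp_sums_def using edge_exp_in_edge_exps p(1,2) by blast
  moreover have "\<forall>k\<in>C. lookup (edge_exp x y + edge_exp x' y') k \<le> u k"
    using p(3) by (simp add: lookup_add)
  ultimately show "\<exists>g\<in>edge_exp_sums. \<forall>k\<in>C. lookup g k \<le> u k"
    by blast
next
  assume "\<exists>g\<in>edge_exp_sums. \<forall>k\<in>C. lookup g k \<le> u k"
  then obtain g h where gh: "g \<in> edge_exps" "h \<in> edge_exps" "\<forall>k\<in>C. lookup (g + h) k \<le> u k"
    unfolding edge_exp_sums_def by blast
  obtain x y x' y' where "g = edge_exp x y" "{x, y} \<in> W" "h = edge_exp x' y'" "{x', y'} \<in> W"
    using gh(1,2) unfolding edge_exps_def by blast
  then show "in_square_at C u"
    using gh(3) by (intro in_square_atI[of x y x' y']) (auto simp: lookup_add)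
qed

lemma nbrsD: "l \<in> nbrs i \<Longrightarrow> {i, l} \<in> EH \<and> l \<in> V \<and> l \<noteq> i"
  unfolding nbrs_def using H_edgeD by blast

lemma weight_le_whisker: "weight_condition \<Longrightarrow> {i, j} \<in> EH \<Longrightarrow> w i j \<le> w i (m + i)"
  unfolding weight_condition_def by fastforce

lemma lookup_edge_exp_le_whisker:
  assumes c: weight_condition and l: "l \<in> V" and xy: "{x, y} \<in> W"
  shows "lookup (edge_exp x y) l \<le> w l (m + l)"
proof -
  have bound: "w l z \<le> w l (m + l)" if "{l, z} \<in> W" for z
    using whiskered_at_base[OF that l] weight_le_whisker[OF c, of l z] by auto
  show ?thesis
    using bound[of y] bound[of x] xy whiskered_commute[OF xy] whiskered_neq[OF xy]
    by (auto simp: lookup_edge_exp)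
qed

lemma edge_exp_at_base:
  assumes i: "i \<in> V" and xy: "{x, y} \<in> W" and pos: "0 < lookup (edge_exp x y) i"
  shows "edge_exp x y = edge_exp i (m + i) \<or> (\<exists>l\<in>nbrs i. edge_exp x y = edge_exp i l)"
proof -
  have "i = x \<or> i = y"
    using pos by (simp add: lookup_edge_exp split: if_splits)
  then show ?thesis
  proof
    assume "i = x"
    then show ?thesis
      using whiskered_at_base[of i y] xy i unfolding nbrs_def by auto
  next
    assume "i = y"
    then show ?thesis
      using whiskered_at_base[of i x] whiskered_commute[OF xy] i edge_exp_commute[of x y]
      unfolding nbrs_def by auto
  qed
qed

text \<open>Under the weight condition the whisker edge at \<open>i\<close> can be traded for the edge
  \<open>{i, l\<^sub>0}\<close>; this only costs something in the coordinate \<open>l\<^sub>0\<close>.\<close>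

lemma exists_edge_avoiding_whisker:
  assumes c: weight_condition and i: "i \<in> V" and l0: "{i, l0} \<in> EH" and xy: "{x, y} \<in> W"
  obtains x' y' where "{x', y'} \<in> W" "lookup (edge_exp x' y') (m + i) = 0"
    "\<And>k. k \<noteq> l0 \<Longrightarrow> lookup (edge_exp x' y') k \<le> lookup (edge_exp x y) k"
proof (cases "0 < lookup (edge_exp x y) (m + i)")
  case True
  then have exy: "edge_exp x y = edge_exp i (m + i)"
    using edge_exp_at_whisker[OF i xy] by blast
  have l0V: "l0 \<in> V" "i \<noteq> l0"
    using H_edgeD[OF l0] by auto
  then have "lookup (edge_exp i l0) (m + i) = 0"
    using lookup_H_edge_exp(3)[OF l0] i by simp
  moreover have "lookup (edge_exp i l0) k \<le> lookup (edge_exp x y) k" if "k \<noteq> l0" for k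
  proof (cases "k = i")
    case True
    then show ?thesis
      using exy lookup_whisker_exp(1)[OF i] lookup_H_edge_exp(1)[OF l0] weight_le_whisker[OF c l0]
      by simp
  next
    case False
    then show ?thesis
      using lookup_H_edge_exp(3)[OF l0 False that] by simp
  qed
  ultimately show ?thesis
    using that H_edge_in_whiskered[OF l0] by blast
next
  case False
  then show ?thesis
    using that xy by simp
qed

lemma in_square_at_of_removed_nbr:
  assumes c: weight_condition and i: "i \<in> V" and l0: "l0 \<in> R" "{i, l0} \<in> EH"
    and sq: "in_square_at (cover_set R (insert i K)) u"
  shows "in_square_at (cover_set R K) u"
proof -
  obtain x1 y1 x2 y2 where p: "{x1, y1} \<in> W" "{x2, y2} \<in> W"
    "\<And>k. k \<in> cover_set R (insert i K) \<Longrightarrow>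
      lookup (edge_exp x1 y1) k + lookup (edge_exp x2 y2) k \<le> u k"
    using sq by (rule in_square_atE) (rule that)
  obtain a1 b1 where s1: "{a1, b1} \<in> W" "lookup (edge_exp a1 b1) (m + i) = 0"
    "\<And>k. k \<noteq> l0 \<Longrightarrow> lookup (edge_exp a1 b1) k \<le> lookup (edge_exp x1 y1) k"
    using exists_edge_avoiding_whisker[OF c i l0(2) p(1)] by blast
  obtain a2 b2 where s2: "{a2, b2} \<in> W" "lookup (edge_exp a2 b2) (m + i) = 0"
    "\<And>k. k \<noteq> l0 \<Longrightarrow> lookup (edge_exp a2 b2) k \<le> lookup (edge_exp x2 y2) k"
    using exists_edge_avoiding_whisker[OF c i l0(2) p(2)] by blast
  have l0C: "l0 \<notin> cover_set R K"
    using cover_set_base_iff H_edgeD[OF l0(2)] l0(1) by blast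
  show ?thesis
  proof (rule in_square_atI[OF s1(1) s2(1)])
    fix k
    assume k: "k \<in> cover_set R K"
    show "lookup (edge_exp a1 b1) k + lookup (edge_exp a2 b2) k \<le> u k"
    proof (cases "k = m + i")
      case True
      then show ?thesis
        using s1(2) s2(2) by simp
    next
      case False
      then have "k \<in> cover_set R (insert i K)" "k \<noteq> l0"
        using k l0C unfolding cover_set_def by auto
      then show ?thesis
        using p(3) s1(3) s2(3) by (meson add_mono order_trans)
    qed
  qed
qed

text \<open>The symmetric trade: an edge through a whisker vertex \<open>m + l\<close> of a neighbour \<open>l\<close>
  of \<open>i\<close> is replaced by the edge \<open>{i, l}\<close>, which only costs something in the coordinate \<open>i\<close>.\<close>

lemma exists_edge_avoiding_nbr_whiskers:
  assumes c: weight_condition and i: "i \<in> V" and xy: "{x, y} \<in> W"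
  obtains x' y' where "{x', y'} \<in> W"
    "\<And>k. k \<noteq> i \<Longrightarrow> lookup (edge_exp x' y') k \<le> lookup (edge_exp x y) k"
    "\<And>l. l \<in> nbrs i \<Longrightarrow> lookup (edge_exp x' y') (m + l) = 0"
    "0 < lookup (edge_exp x' y') i \<Longrightarrow>
      (edge_exp x' y' = edge_exp i (m + i) \<and> edge_exp x y = edge_exp i (m + i)) \<or>
      (\<exists>l\<in>nbrs i. edge_exp x' y' = edge_exp i l)"
proof (cases "\<exists>l\<in>nbrs i. 0 < lookup (edge_exp x y) (m + l)")
  case True
  then obtain l where l: "l \<in> nbrs i" "0 < lookup (edge_exp x y) (m + l)"
    by blast
  have il: "{i, l} \<in> EH" and lV: "l \<in> V" "l \<noteq> i"
    using nbrsD[OF l(1)] by auto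
  have exy: "edge_exp x y = edge_exp l (m + l)"
    using edge_exp_at_whisker[OF lV(1) xy l(2)] .
  have li: "{l, i} \<in> EH"
    using il by (simp add: insert_commute)
  have "lookup (edge_exp i l) k \<le> lookup (edge_exp x y) k" if "k \<noteq> i" for k
  proof (cases "k = l")
    case True
    then show ?thesis
      using exy lookup_whisker_exp(1)[OF lV(1)] lookup_H_edge_exp(2)[OF il] weight_le_whisker[OF c li]
      by simp
  next
    case False
    then show ?thesis
      using lookup_H_edge_exp(3)[OF il that] by simp
  qed
  moreover have "lookup (edge_exp i l) (m + l') = 0" if "l' \<in> nbrs i" for l'
    using nbrsD[OF that] i lV lookup_H_edge_exp(3)[OF il] by simp
  ultimately show ?thesis
    using that H_edge_in_whiskered[OF il] l(1) by blast
next
  case False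
  then show ?thesis
    using that[OF xy] edge_exp_at_base[OF i xy] by auto
qed

lemma in_square_at_H_edge:
  assumes c: weight_condition and l: "l \<in> nbrs i" and X: "{xX, yX} \<in> W"
    and at_i: "w i (m + i) + lookup (edge_exp xX yX) i \<le> u i"
    and at_l: "w l i + lookup (edge_exp xX yX) l \<le> u l"
    and off: "\<And>k. k \<in> C \<Longrightarrow> k \<noteq> i \<Longrightarrow> lookup (edge_exp xX yX) k \<le> u k"
  shows "in_square_at C u"
proof -
  have il: "{i, l} \<in> EH"
    using nbrsD[OF l] by blast
  show ?thesis
  proof (rule in_square_atI[OF H_edge_in_whiskered[OF il] X])
    fix k
    assume k: "k \<in> C"
    consider "k = i" | "k = l" | "k \<noteq> i" "k \<noteq> l"
      by blast
    then show "lookup (edge_exp i l) k + lookup (edge_exp xX yX) k \<le> u k"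
    proof cases
      case 1
      then show ?thesis
        using lookup_H_edge_exp(1)[OF il] weight_le_whisker[OF c il] at_i by simp
    next
      case 2
      then show ?thesis
        using lookup_H_edge_exp(2)[OF il] at_l by simp
    next
      case 3
      then show ?thesis
        using lookup_H_edge_exp(3)[OF il] off[OF k] by simp
    qed
  qed
qed

text \<open>When \<open>l = l'\<close> the weight condition forces the first alternative
  at \<open>{i, l}\<close>; when \<open>l \<noteq> l'\<close>, triangle-freeness forbids \<open>X = {l, l'}\<close>.\<close>

lemma in_square_at_two_nbrs:
  assumes c: weight_condition and l: "l \<in> nbrs i" "l' \<in> nbrs i" and X: "{xX, yX} \<in> W"
    and at_i: "w i (m + i) + lookup (edge_exp xX yX) i \<le> u i"
    and off: "\<And>k. k \<in> C \<Longrightarrow> k \<noteq> i \<Longrightarrow> lookup (edge_exp xX yX) k \<le> u k"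
    and heavy: "u i < w i l + w i l'"
    and at_l: "w l i + lookup (edge_exp i l') l \<le> u l"
    and at_l': "lookup (edge_exp i l) l' + w l' i \<le> u l'"
  shows "in_square_at C u"
proof -
  have il: "{i, l} \<in> EH" "l \<in> V" "l \<noteq> i" and il': "{i, l'} \<in> EH" "l' \<in> V" "l' \<noteq> i"
    using nbrsD l by auto
  show ?thesis
  proof (cases "l = l'")
    case True
    then have "u i < 2 * w i l"
      using heavy by simp
    then have "\<not> 2 * w i l \<le> w i (m + i)"
      using at_i by linarith
    then have "w l (m + l) = w l i"
      using c il(1) unfolding weight_condition_def by blast
    moreover have "lookup (edge_exp xX yX) l \<le> w l (m + l)"
      by (rule lookup_edge_exp_le_whisker[OF c il(2) X])
    ultimately have "w l i + lookup (edge_exp xX yX) l \<le> u l"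
      using at_l True lookup_H_edge_exp(2)[OF il(1)] by simp
    then show ?thesis
      using in_square_at_H_edge[OF c l(1) X at_i _ off] by blast
  next
    case False
    have "lookup (edge_exp xX yX) l = 0 \<or> lookup (edge_exp xX yX) l' = 0"
    proof (rule ccontr)
      assume "\<not> ?thesis"
      then have "l \<in> {xX, yX}" "l' \<in> {xX, yX}"
        by (auto simp: lookup_edge_exp split: if_splits)
      then have "{l, l'} \<in> W"
        using X False by (metis doubleton_eq_iff insertE singletonD)
      moreover have "{l, i} \<in> W" "{i, l'} \<in> W"
        using H_edge_in_whiskered il(1) il'(1) by (auto simp: insert_commute)
      ultimately show False
        using tri_free il il' False unfolding triangle_free_def by blast
    qed
    then show ?thesis
    proof
      assume "lookup (edge_exp xX yX) l = 0"
      then show ?thesis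
        using in_square_at_H_edge[OF c l(1) X at_i _ off] at_l by simp
    next
      assume "lookup (edge_exp xX yX) l' = 0"
      then show ?thesis
        using in_square_at_H_edge[OF c l(2) X at_i _ off] at_l' by simp
    qed
  qed
qed

lemma in_square_atI_coord:
  assumes "{x, y} \<in> W" "{x', y'} \<in> W"
    and "\<And>k. k \<in> C \<Longrightarrow> k \<noteq> i \<Longrightarrow> lookup (edge_exp x y) k + lookup (edge_exp x' y') k \<le> u k"
    and "lookup (edge_exp x y) i + lookup (edge_exp x' y') i \<le> u i"
  shows "in_square_at C u"
  using assms by (intro in_square_atI[OF assms(1,2)]) (metis (no_types))

lemma in_square_at_off_base:
  assumes c: weight_condition and i: "i \<in> V" "i \<notin> K"
    and sq: "in_square_at (cover_set (insert i R) (K \<union> nbrs i)) u"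
  obtains x3 y3 x4 y4 where "{x3, y3} \<in> W" "{x4, y4} \<in> W"
    "\<And>k. k \<in> cover_set R K \<Longrightarrow> k \<noteq> i \<Longrightarrow>
      lookup (edge_exp x3 y3) k + lookup (edge_exp x4 y4) k \<le> u k"
    "0 < lookup (edge_exp x3 y3) i \<Longrightarrow>
      w (m + i) i \<le> u (m + i) \<or> (\<exists>l\<in>nbrs i. edge_exp x3 y3 = edge_exp i l)"
    "0 < lookup (edge_exp x4 y4) i \<Longrightarrow>
      w (m + i) i \<le> u (m + i) \<or> (\<exists>l\<in>nbrs i. edge_exp x4 y4 = edge_exp i l)"
proof -
  let ?C2 = "cover_set (insert i R) (K \<union> nbrs i)"
  obtain x1 y1 x2 y2 where p: "{x1, y1} \<in> W" "{x2, y2} \<in> W"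
    "\<And>k. k \<in> ?C2 \<Longrightarrow> lookup (edge_exp x1 y1) k + lookup (edge_exp x2 y2) k \<le> u k"
    using sq by (rule in_square_atE) (rule that)
  have "m + i \<in> ?C2"
    using cover_set_whisker_iff[OF i(1)] i(2) nbrsD by blast
  then have "lookup (edge_exp x1 y1) (m + i) \<le> u (m + i)" "lookup (edge_exp x2 y2) (m + i) \<le> u (m + i)"
    using p(3) by (meson add_leD1 add_leD2)+
  then have whisker1: "edge_exp x1 y1 = edge_exp i (m + i) \<Longrightarrow> w (m + i) i \<le> u (m + i)"
    and whisker2: "edge_exp x2 y2 = edge_exp i (m + i) \<Longrightarrow> w (m + i) i \<le> u (m + i)"
    using lookup_whisker_exp(2)[OF i(1)] by auto
  obtain x3 y3 where r3: "{x3, y3} \<in> W"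
    "\<And>k. k \<noteq> i \<Longrightarrow> lookup (edge_exp x3 y3) k \<le> lookup (edge_exp x1 y1) k"
    "\<And>l. l \<in> nbrs i \<Longrightarrow> lookup (edge_exp x3 y3) (m + l) = 0"
    "0 < lookup (edge_exp x3 y3) i \<Longrightarrow>
      (edge_exp x3 y3 = edge_exp i (m + i) \<and> edge_exp x1 y1 = edge_exp i (m + i)) \<or>
      (\<exists>l\<in>nbrs i. edge_exp x3 y3 = edge_exp i l)"
    by (rule exists_edge_avoiding_nbr_whiskers[OF c i(1) p(1)]) (rule that)
  obtain x4 y4 where r4: "{x4, y4} \<in> W"
    "\<And>k. k \<noteq> i \<Longrightarrow> lookup (edge_exp x4 y4) k \<le> lookup (edge_exp x2 y2) k"
    "\<And>l. l \<in> nbrs i \<Longrightarrow> lookup (edge_exp x4 y4) (m + l) = 0"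
    "0 < lookup (edge_exp x4 y4) i \<Longrightarrow>
      (edge_exp x4 y4 = edge_exp i (m + i) \<and> edge_exp x2 y2 = edge_exp i (m + i)) \<or>
      (\<exists>l\<in>nbrs i. edge_exp x4 y4 = edge_exp i l)"
    by (rule exists_edge_avoiding_nbr_whiskers[OF c i(1) p(2)]) (rule that)
  show ?thesis
  proof (rule that[OF r3(1) r4(1)])
    fix k
    assume k: "k \<in> cover_set R K" "k \<noteq> i"
    show "lookup (edge_exp x3 y3) k + lookup (edge_exp x4 y4) k \<le> u k"
    proof (cases "\<exists>l\<in>nbrs i. k = m + l")
      case True
      then show ?thesis
        using r3(3) r4(3) by auto
    next
      case False
      then have "k \<in> ?C2"
        using k unfolding cover_set_def by auto
      then show ?thesis
        using p(3) r3(2)[OF k(2)] r4(2)[OF k(2)] by (meson add_mono order_trans)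
    qed
  next
    show "w (m + i) i \<le> u (m + i) \<or> (\<exists>l\<in>nbrs i. edge_exp x3 y3 = edge_exp i l)"
      if "0 < lookup (edge_exp x3 y3) i"
      using r3(4)[OF that] whisker1 by blast
    show "w (m + i) i \<le> u (m + i) \<or> (\<exists>l\<in>nbrs i. edge_exp x4 y4 = edge_exp i l)"
      if "0 < lookup (edge_exp x4 y4) i"
      using r4(4)[OF that] whisker2 by blast
  qed
qed

lemma in_square_at_heavy_whisker:
  assumes c: weight_condition and i: "i \<in> V" "i \<notin> K"
    and sq2: "in_square_at (cover_set (insert i R) (K \<union> nbrs i)) u"
    and heavy: "w i (m + i) + w i (m + i) \<le> u i"
  shows "in_square_at (cover_set R K) u"
proof -
  obtain x3 y3 x4 y4 where pair: "{x3, y3} \<in> W" "{x4, y4} \<in> W"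
    "\<And>k. k \<in> cover_set R K \<Longrightarrow> k \<noteq> i \<Longrightarrow>
      lookup (edge_exp x3 y3) k + lookup (edge_exp x4 y4) k \<le> u k"
    by (rule in_square_at_off_base[OF c i sq2]) (rule that)
  have "lookup (edge_exp x3 y3) i \<le> w i (m + i)" "lookup (edge_exp x4 y4) i \<le> w i (m + i)"
    using lookup_edge_exp_le_whisker[OF c i(1)] pair(1,2) by blast+
  then have "lookup (edge_exp x3 y3) i + lookup (edge_exp x4 y4) i \<le> u i"
    using heavy by linarith
  then show ?thesis
    using in_square_atI_coord[OF pair(1,2), of "cover_set R K" i u] pair(3) by blast
qed

lemma in_square_at_whisker_excess:
  assumes c: weight_condition and i: "i \<in> V" "i \<notin> K" and no_removed_nbr: "nbrs i \<inter> R = {}"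
    and sq2: "in_square_at (cover_set (insert i R) (K \<union> nbrs i)) u"
    and X: "{xX, yX} \<in> W"
    and at_i: "w i (m + i) + lookup (edge_exp xX yX) i \<le> u i"
    and excess: "u (m + i) < w (m + i) i"
    and off: "\<And>k. k \<in> cover_set R K \<Longrightarrow> k \<noteq> i \<Longrightarrow> lookup (edge_exp xX yX) k \<le> u k"
  shows "in_square_at (cover_set R K) u"
proof -
  obtain x3 y3 x4 y4 where pair: "{x3, y3} \<in> W" "{x4, y4} \<in> W"
    "\<And>k. k \<in> cover_set R K \<Longrightarrow> k \<noteq> i \<Longrightarrow>
      lookup (edge_exp x3 y3) k + lookup (edge_exp x4 y4) k \<le> u k"
    "0 < lookup (edge_exp x3 y3) i \<Longrightarrow>
      w (m + i) i \<le> u (m + i) \<or> (\<exists>l\<in>nbrs i. edge_exp x3 y3 = edge_exp i l)"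
    "0 < lookup (edge_exp x4 y4) i \<Longrightarrow>
      w (m + i) i \<le> u (m + i) \<or> (\<exists>l\<in>nbrs i. edge_exp x4 y4 = edge_exp i l)"
    by (rule in_square_at_off_base[OF c i sq2]) (rule that)
  show ?thesis
  proof (cases "lookup (edge_exp x3 y3) i + lookup (edge_exp x4 y4) i \<le> u i")
    case True
    then show ?thesis
      using in_square_atI_coord[OF pair(1,2), of "cover_set R K" i u] pair(3) by blast
  next
    case False
    have "lookup (edge_exp x3 y3) i \<le> w i (m + i)" "lookup (edge_exp x4 y4) i \<le> w i (m + i)"
      using lookup_edge_exp_le_whisker[OF c i(1)] pair(1,2) by blast+
    then have "0 < lookup (edge_exp x3 y3) i" "0 < lookup (edge_exp x4 y4) i"
      using False at_i by linarith+
    then obtain l l' where l: "l \<in> nbrs i" "edge_exp x3 y3 = edge_exp i l"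
      and l': "l' \<in> nbrs i" "edge_exp x4 y4 = edge_exp i l'"
      using pair(4,5) excess by (meson leD)
    have il: "{i, l} \<in> EH" "l \<noteq> i" "l \<in> cover_set R K"
      and il': "{i, l'} \<in> EH" "l' \<noteq> i" "l' \<in> cover_set R K"
      using nbrsD no_removed_nbr cover_set_base_iff l(1) l'(1) by auto
    show ?thesis
    proof (rule in_square_at_two_nbrs[OF c l(1) l'(1) X at_i off])
      show "u i < w i l + w i l'"
        using False l(2) l'(2) lookup_H_edge_exp(1) il(1) il'(1) by simp
      show "w l i + lookup (edge_exp i l') l \<le> u l"
        using pair(3)[OF il(3,2)] l(2) l'(2) lookup_H_edge_exp(2)[OF il(1)] by simp
      show "lookup (edge_exp i l) l' + w l' i \<le> u l'"
        using pair(3)[OF il'(3,2)] l(2) l'(2) lookup_H_edge_exp(2)[OF il'(1)] by simp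
    qed
  qed
qed

lemma in_square_at_undecided_vertex:
  assumes c: weight_condition and i: "i \<in> V" "i \<notin> R" "i \<notin> K"
    and no_removed_nbr: "nbrs i \<inter> R = {}"
    and sq1: "in_square_at (cover_set R (insert i K)) u"
    and sq2: "in_square_at (cover_set (insert i R) (K \<union> nbrs i)) u"
  shows "in_square_at (cover_set R K) u"
proof -
  let ?C = "cover_set R K" and ?C1 = "cover_set R (insert i K)"
  obtain x1 y1 x2 y2 where p: "{x1, y1} \<in> W" "{x2, y2} \<in> W"
    "\<And>k. k \<in> ?C1 \<Longrightarrow> lookup (edge_exp x1 y1) k + lookup (edge_exp x2 y2) k \<le> u k"
    using sq1 by (rule in_square_atE) (rule that)
  have C1: "k \<in> ?C1" if "k \<in> ?C" "k \<noteq> m + i" for k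
    using that unfolding cover_set_def by auto
  have iC1: "i \<in> ?C1"
    using cover_set_base_iff i by blast
  have one_whisker: "in_square_at ?C u"
    if b: "{xb, yb} \<in> W"
      and ab: "\<And>k. k \<in> ?C1 \<Longrightarrow> lookup (edge_exp i (m + i)) k + lookup (edge_exp xb yb) k \<le> u k"
      and zb: "lookup (edge_exp xb yb) (m + i) = 0" and over: "u (m + i) < w (m + i) i"
    for xb yb
  proof (rule in_square_at_whisker_excess[OF c i(1,3) no_removed_nbr sq2 b _ over])
    show "w i (m + i) + lookup (edge_exp xb yb) i \<le> u i"
      using ab[OF iC1] lookup_whisker_exp(1)[OF i(1)] by simp
    show "lookup (edge_exp xb yb) k \<le> u k" if "k \<in> ?C" "k \<noteq> i" for k
    proof (cases "k = m + i")
      case True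
      then show ?thesis
        using zb by simp
    next
      case False
      show ?thesis
        using ab[OF C1[OF that(1) False]] by (rule add_leD2)
    qed
  qed
  show ?thesis
  proof (cases "lookup (edge_exp x1 y1) (m + i) + lookup (edge_exp x2 y2) (m + i) \<le> u (m + i)")
    case True
    then show ?thesis
      using in_square_atI_coord[OF p(1,2), of ?C "m + i" u] p(3) C1 by blast
  next
    case False
    consider "0 < lookup (edge_exp x1 y1) (m + i)" "0 < lookup (edge_exp x2 y2) (m + i)"
      | "0 < lookup (edge_exp x1 y1) (m + i)" "lookup (edge_exp x2 y2) (m + i) = 0"
      | "lookup (edge_exp x1 y1) (m + i) = 0" "0 < lookup (edge_exp x2 y2) (m + i)"
      using False by force
    then show ?thesis
    proof cases
      case 1
      then have "edge_exp x1 y1 = edge_exp i (m + i)" "edge_exp x2 y2 = edge_exp i (m + i)"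
        using edge_exp_at_whisker[OF i(1)] p(1,2) by blast+
      then show ?thesis
        using in_square_at_heavy_whisker[OF c i(1,3) sq2] p(3)[OF iC1] lookup_whisker_exp(1)[OF i(1)]
        by simp
    next
      case 2
      then have "edge_exp x1 y1 = edge_exp i (m + i)"
        using edge_exp_at_whisker[OF i(1) p(1)] by blast
      then show ?thesis
        using one_whisker[OF p(2)] p(3) False 2 lookup_whisker_exp(2)[OF i(1)] by simp
    next
      case 3
      then have "edge_exp x2 y2 = edge_exp i (m + i)"
        using edge_exp_at_whisker[OF i(1) p(2)] by blast
      then show ?thesis
        using one_whisker[OF p(1)] p(3) False 3 lookup_whisker_exp(2)[OF i(1)] by (simp add: add.commute)
    qed
  qed
qed

lemma cover_set_decided:
  assumes "V - R - K = {}" "R \<inter> K = {}" "R \<subseteq> V" "\<And>r l. r \<in> R \<Longrightarrow> {r, l} \<in> EH \<Longrightarrow> l \<in> K"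
  shows "H_vertex_cover K" "R = V - K"
proof -
  show "H_vertex_cover K"
    unfolding H_vertex_cover_def
  proof (intro allI impI)
    fix x y
    assume xy: "{x, y} \<in> EH"
    then have "x \<in> V"
      using H_edgeD by blast
    then show "x \<in> K \<or> y \<in> K"
      using assms(1,4) xy by blast
  qed
  show "R = V - K"
    using assms(1-3) by blast
qed

text \<open>Induction over partial covers: each step decides for one more vertex \<open>i\<close> of \<open>H\<close>
  whether it stays in the cover (\<open>i \<in> K\<close>, its whisker vertex leaves) or leaves it
  (\<open>i \<in> R\<close>, so all its neighbours must stay).\<close>

lemma in_square_at_cover_set:
  assumes c: weight_condition
    and covers: "\<And>T. T \<subseteq> V \<Longrightarrow> H_vertex_cover T \<Longrightarrow> in_square_at (cover_set (V - T) T) u"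
  shows "R \<subseteq> V \<Longrightarrow> K \<subseteq> V \<Longrightarrow> R \<inter> K = {} \<Longrightarrow> (\<And>r l. r \<in> R \<Longrightarrow> {r, l} \<in> EH \<Longrightarrow> l \<in> K)
    \<Longrightarrow> in_square_at (cover_set R K) u"
proof (induction "card (V - R - K)" arbitrary: R K rule: less_induct)
  case less
  show ?case
  proof (cases "V - R - K = {}")
    case True
    then show ?thesis
      using covers[OF less.prems(2)] cover_set_decided[OF True less.prems(3,1,4)] by simp
  next
    case False
    then obtain i where i: "i \<in> V" "i \<notin> R" "i \<notin> K"
      by blast
    have IH: "in_square_at (cover_set R' K') u"
      if "V - R' - K' \<subseteq> V - R - K - {i}" "R' \<subseteq> V" "K' \<subseteq> V" "R' \<inter> K' = {}"
        "\<And>r l. r \<in> R' \<Longrightarrow> {r, l} \<in> EH \<Longrightarrow> l \<in> K'"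
      for R' K'
    proof (rule less.hyps)
      show "card (V - R' - K') < card (V - R - K)"
        using that(1) i by (intro psubset_card_mono) auto
    qed (use that in auto)
    have sq1: "in_square_at (cover_set R (insert i K)) u"
    proof (rule IH)
      show "l \<in> insert i K" if "r \<in> R" "{r, l} \<in> EH" for r l
        using less.prems(4) that by blast
    qed (use less.prems i in auto)
    show ?thesis
    proof (cases "\<exists>l0\<in>R. {i, l0} \<in> EH")
      case True
      then obtain l0 where "l0 \<in> R" "{i, l0} \<in> EH"
        by blast
      then show ?thesis
        using in_square_at_of_removed_nbr[OF c i(1) _ _ sq1] by blast
    next
      case False
      then have no_removed_nbr: "nbrs i \<inter> R = {}"
        unfolding nbrs_def by blast
      have "in_square_at (cover_set (insert i R) (K \<union> nbrs i)) u"
      proof (rule IH)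
        show "l \<in> K \<union> nbrs i" if "r \<in> insert i R" "{r, l} \<in> EH" for r l
          using less.prems(4) that unfolding nbrs_def by blast
        show "K \<union> nbrs i \<subseteq> V"
          using less.prems(2) nbrsD by blast
        show "insert i R \<inter> (K \<union> nbrs i) = {}"
          using less.prems(3) i no_removed_nbr nbrsD by blast
      qed (use less.prems i in auto)
      then show ?thesis
        using in_square_at_undecided_vertex[OF c i no_removed_nbr sq1] by blast
    qed
  qed
qed

lemma cover_set_empty: "cover_set {} {} = {1..2*m}"
proof
  show "cover_set {} {} \<subseteq> {1..2*m}"
    unfolding cover_set_def by auto
  show "{1..2*m} \<subseteq> cover_set {} {}"
  proof
    fix k
    assume k: "k \<in> {1..2*m}"
    show "k \<in> cover_set {} {}"
    proof (cases "k \<le> m")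
      case True
      then show ?thesis
        using k unfolding cover_set_def by auto
    next
      case False
      then have "k - m \<in> V" "k = m + (k - m)"
        using k by auto
      then show ?thesis
        unfolding cover_set_def by blast
    qed
  qed
qed

lemma in_square_at_all:
  assumes c: weight_condition
    and covers: "\<And>T. T \<subseteq> V \<Longrightarrow> H_vertex_cover T \<Longrightarrow> in_square_at (cover_set (V - T) T) u"
  shows "in_square_at {1..2*m} u"
  using in_square_at_cover_set[OF c covers, of "{}" "{}"] cover_set_empty by simp

section \<open>The symbolic square under the weight condition\<close>

lemma symb_power2_in_square_at_covers:
  assumes f: "f \<in> symb_power2 S (edge_ideal :: 'k::field mpoly set)" and a: "a \<in> keys f"
    and T: "T \<subseteq> V" "H_vertex_cover T"
  shows "in_square_at (cover_set (V - T) T) (lookup a)"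
proof -
  let ?C = "cover_set (V - T) T"
  have fS: "f \<in> S"
    using f symb_power2_iff by blast
  obtain s where s: "s \<in> S" "s \<notin> var_prime (2*m) ?C" "s * f \<in> mon_ideal (2*m) edge_exp_sums"
    using f var_prime_cover_set_in_min_primes[OF T] ideal_prod_edge_ideal_eq
    unfolding symb_power2_iff by (metis DiffE)
  have "\<exists>x\<in>keys s. \<forall>k\<in>?C. lookup x k = 0"
    using s(1,2) unfolding var_prime_def by blast
  moreover have "s * f \<in> mon_ideal_on (2*m) ?C edge_exp_sums"
    using s(3) mon_ideal_subset_mon_ideal_on by blast
  ultimately have "f \<in> mon_ideal_on (2*m) ?C edge_exp_sums"
    using mon_ideal_on_cancel[OF finite_cover_set s(1) fS] by blast
  then show ?thesis
    unfolding in_square_at_iff using mon_ideal_onD(2) a by blast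
qed

lemma symb_power2_subset_square:
  assumes c: weight_condition
  shows "symb_power2 S edge_ideal \<subseteq> (mon_ideal (2*m) edge_exp_sums :: 'k::field mpoly set)"
proof
  fix f :: "'k mpoly"
  assume f: "f \<in> symb_power2 S edge_ideal"
  show "f \<in> mon_ideal (2*m) edge_exp_sums"
  proof (rule mon_ideal_onI)
    show "f \<in> S"
      using f symb_power2_iff by blast
    fix a
    assume a: "a \<in> keys f"
    have "in_square_at {1..2*m} (lookup a)"
      using in_square_at_all[OF c symb_power2_in_square_at_covers[OF f a]] .
    then obtain g where g: "g \<in> edge_exp_sums" "\<forall>k\<in>{1..2*m}. lookup g k \<le> lookup a k"
      unfolding in_square_at_iff by blast
    moreover have "lookup g k = 0" if "k \<notin> {1..2*m}" for k
      using keys_edge_exp_sums_subset[OF g(1)] that by (auto simp: in_keys_iff)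
    ultimately show "\<exists>g\<in>edge_exp_sums. \<forall>k\<in>UNIV. lookup g k \<le> lookup a k"
      by (metis UNIV_I le0)
  qed
qed

section \<open>Witnesses against the equality\<close>

lemma min_prime_H_edge_cases:
  assumes P: "P \<in> min_primes S (edge_ideal :: 'k::field mpoly set)" and ij: "{i, j} \<in> EH"
  obtains (both) "var i \<in> P" "var (m + i) \<notin> P" "var j \<in> P" "var (m + j) \<notin> P"
    | (left) "var i \<in> P" "var (m + i) \<notin> P" "var j \<notin> P" "var (m + j) \<in> P"
    | (right) "var i \<notin> P" "var (m + i) \<in> P" "var j \<in> P" "var (m + j) \<notin> P"
proof -
  have Pp: "is_prime_ideal S P" "edge_ideal \<subseteq> P"
    using P unfolding min_primes_def by blast+
  have ijV: "i \<in> V" "j \<in> V"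
    using H_edgeD[OF ij] by auto
  have "var i \<in> P \<or> var (m + i) \<in> P" "var j \<in> P \<or> var (m + j) \<in> P" "var i \<in> P \<or> var j \<in> P"
    using prime_edge_var[OF Pp whisker_in_whiskered[OF ijV(1)]]
      prime_edge_var[OF Pp whisker_in_whiskered[OF ijV(2)]]
      prime_edge_var[OF Pp H_edge_in_whiskered[OF ij]] by simp_all
  moreover have "var i \<notin> P \<or> var (m + i) \<notin> P" "var j \<notin> P \<or> var (m + j) \<notin> P"
    using min_prime_not_both_whisker_vars[OF P] ijV by simp_all
  ultimately show ?thesis
    using that by argo
qed

text \<open>Localizing at a prime \<open>P\<close> turns the variables outside \<open>P\<close> into units, so only the
  coordinates of the remaining variables have to be dominated.\<close>

lemma in_square_at_compl_localizes:
  assumes P: "is_prime_ideal S P" and D: "\<And>c. c \<in> D \<Longrightarrow> var c \<notin> P"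
    and u: "keys u \<subseteq> {1..2*m}" and sq: "in_square_at (- D) (lookup u)"
  shows "\<exists>s\<in>S - P. s * single u 1 \<in> (mon_ideal (2*m) edge_exp_sums :: 'k::field mpoly set)"
proof -
  obtain g where g: "g \<in> edge_exp_sums" "\<forall>k\<in>- D. lookup g k \<le> lookup u k"
    using sq unfolding in_square_at_iff by blast
  define \<sigma> where "\<sigma> = restrict_keys (\<lambda>k. k \<in> D) g"
  have \<sigma>_keys: "keys \<sigma> \<subseteq> D" "keys \<sigma> \<subseteq> {1..2*m}"
    using keys_edge_exp_sums_subset[OF g(1)] unfolding \<sigma>_def keys_restrict_keys by auto
  have "single \<sigma> (1::'k) \<in> S"
    by (rule poly_ring_single[OF \<sigma>_keys(2)])
  moreover have "single \<sigma> (1::'k) \<notin> P"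
  proof
    assume "single \<sigma> (1::'k) \<in> P"
    then obtain k where "k \<in> keys \<sigma>" "var k \<in> P"
      using prime_ideal_var_of_monomial[OF P \<sigma>_keys(2)] by blast
    then show False
      using D \<sigma>_keys(1) by blast
  qed
  moreover have "single (\<sigma> + u) (1::'k) \<in> mon_ideal (2*m) edge_exp_sums"
  proof (rule single_in_mon_ideal_on[OF g(1)])
    have "lookup g k \<le> lookup (\<sigma> + u) k" for k
    proof (cases "k \<in> D")
      case True
      then show ?thesis
        by (simp add: \<sigma>_def lookup_add lookup_restrict_keys)
    next
      case False
      then have "lookup g k \<le> lookup u k"
        using g(2) by simp
      then show ?thesis
        by (simp add: lookup_add)
    qed
    then show "\<forall>k\<in>UNIV. lookup g k \<le> lookup (\<sigma> + u) k"
      by blast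
    show "keys (\<sigma> + u) \<subseteq> {1..2*m}"
      unfolding keys_add_nat using \<sigma>_keys(2) u by (rule Un_least)
  qed
  moreover have "single \<sigma> (1::'k) * single u 1 = single (\<sigma> + u) 1"
    by (simp add: mult_single)
  ultimately have "single \<sigma> 1 \<in> S - P" "single \<sigma> (1::'k) * single u 1 \<in> mon_ideal (2*m) edge_exp_sums"
    by simp_all
  then show ?thesis
    by blast
qed

definition witness_exp :: "nat \<Rightarrow> nat \<Rightarrow> nat \<Rightarrow> nat \<Rightarrow> nat \<Rightarrow>\<^sub>0 nat" where
  "witness_exp i j a b = single i a + single j b + single (m + j) (w (m + j) j)"

lemma lookup_witness_exp:
  "lookup (witness_exp i j a b) k =
    (if k = i then a else 0) + (if k = j then b else 0) + (if k = m + j then w (m + j) j else 0)"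
  unfolding witness_exp_def by (simp add: lookup_add lookup_single when_def)

lemma keys_witness_exp_subset: "keys (witness_exp i j a b) \<subseteq> {i, j, m + j}"
  by (auto simp: in_keys_iff lookup_witness_exp split: if_splits)

lemma edge_below_witness:
  assumes ij: "{i, j} \<in> EH" and xy: "{x, y} \<in> W"
    and le: "\<And>k. lookup (edge_exp x y) k \<le> lookup (witness_exp i j a b) k"
  shows "edge_exp x y = edge_exp i j \<or> edge_exp x y = edge_exp j (m + j)"
proof -
  have ijV: "i \<in> V" "j \<in> V" "i \<noteq> j"
    using H_edgeD[OF ij] by auto
  have "keys (edge_exp x y) \<subseteq> keys (witness_exp i j a b)"
    using le by (metis in_keys_iff le_zero_eq subsetI)
  then have ends: "x \<in> {i, j, m + j}" "y \<in> {i, j, m + j}"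
    using keys_edge_exp[OF xy] keys_witness_exp_subset by blast+
  show ?thesis
    using xy
  proof (cases rule: whiskered_cases)
    case 1
    then have "(x = i \<and> y = j) \<or> (x = j \<and> y = i)"
      using ends ijV by auto
    then show ?thesis
      using edge_exp_commute by auto
  next
    case (2 i')
    then show ?thesis
      using ends ijV by auto
  next
    case (3 i')
    then show ?thesis
      using ends ijV edge_exp_commute by auto
  qed
qed

lemma witness_notin_square:
  assumes ij: "{i, j} \<in> EH"
    and n1: "\<not> (2 * w i j \<le> a \<and> 2 * w j i \<le> b)"
    and n2: "\<not> (w i j \<le> a \<and> w j i + w j (m + j) \<le> b)"
  shows "\<not> in_square_at UNIV (lookup (witness_exp i j a b))"
proof
  assume "in_square_at UNIV (lookup (witness_exp i j a b))"
  then obtain x1 y1 x2 y2 where p: "{x1, y1} \<in> W" "{x2, y2} \<in> W"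
    "\<And>k. k \<in> UNIV \<Longrightarrow>
      lookup (edge_exp x1 y1) k + lookup (edge_exp x2 y2) k \<le> lookup (witness_exp i j a b) k"
    by (rule in_square_atE) (rule that)
  have ijV: "i \<in> V" "j \<in> V" "i \<noteq> j"
    using H_edgeD[OF ij] by auto
  have q: "1 \<le> w (m + j) j"
    using weight_pos whisker_in_whiskered[OF ijV(2)] whiskered_commute by blast
  have "lookup (edge_exp x1 y1) k \<le> lookup (witness_exp i j a b) k"
    "lookup (edge_exp x2 y2) k \<le> lookup (witness_exp i j a b) k" for k
    using p(3)[of k] by simp_all
  then have "edge_exp x1 y1 = edge_exp i j \<or> edge_exp x1 y1 = edge_exp j (m + j)"
    "edge_exp x2 y2 = edge_exp i j \<or> edge_exp x2 y2 = edge_exp j (m + j)"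
    using edge_below_witness[OF ij] p(1,2) by blast+
  moreover note at = p(3)[OF UNIV_I, of i] p(3)[OF UNIV_I, of j] p(3)[OF UNIV_I, of "m + j"]
  ultimately show False
  proof (elim disjE)
    assume "edge_exp x1 y1 = edge_exp i j" "edge_exp x2 y2 = edge_exp i j"
    then show False
      using at n1 ijV by (simp add: lookup_edge_exp lookup_witness_exp)
  next
    assume "edge_exp x1 y1 = edge_exp i j" "edge_exp x2 y2 = edge_exp j (m + j)"
    then show False
      using at n2 ijV by (simp add: lookup_edge_exp lookup_witness_exp)
  next
    assume "edge_exp x1 y1 = edge_exp j (m + j)" "edge_exp x2 y2 = edge_exp i j"
    then show False
      using at n2 ijV by (simp add: lookup_edge_exp lookup_witness_exp)
  next
    assume "edge_exp x1 y1 = edge_exp j (m + j)" "edge_exp x2 y2 = edge_exp j (m + j)"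
    then show False
      using at q ijV by (simp add: lookup_edge_exp lookup_witness_exp)
  qed
qed

lemma witness_in_symb_power2:
  assumes ij: "{i, j} \<in> EH"
    and c1: "(w i (m + i) \<le> a \<and> w j (m + j) \<le> b) \<or> 2 * w j (m + j) \<le> b"
    and c2: "w i j \<le> a \<or> w i (m + i) \<le> a"
    and c3: "2 * w j i \<le> b \<or> 2 * w j (m + j) \<le> b"
  shows "single (witness_exp i j a b) 1 \<in> symb_power2 S (edge_ideal :: 'k::field mpoly set)"
proof -
  let ?u = "witness_exp i j a b"
  have ijV: "i \<in> V" "j \<in> V" "i \<noteq> j"
    using H_edgeD[OF ij] by auto
  have u_keys: "keys ?u \<subseteq> {1..2*m}"
    using keys_witness_exp_subset ijV by fastforce
  have wi: "{i, m + i} \<in> W" and wj: "{j, m + j} \<in> W" and eij: "{i, j} \<in> W"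
    using whisker_in_whiskered ijV H_edge_in_whiskered[OF ij] by auto
  have "\<exists>s\<in>S - P. s * single ?u 1 \<in> ideal_prod S edge_ideal edge_ideal"
    if P: "P \<in> min_primes S (edge_ideal :: 'k mpoly set)" for P
  proof -
    have Pp: "is_prime_ideal S P"
      using P unfolding min_primes_def by blast
    have loc: "\<exists>s\<in>S - P. s * single ?u 1 \<in> ideal_prod S edge_ideal edge_ideal"
      if sq: "in_square_at (- D) (lookup ?u)" and D: "\<And>c. c \<in> D \<Longrightarrow> var c \<notin> P" for D
      using in_square_at_compl_localizes[OF Pp D u_keys sq] unfolding ideal_prod_edge_ideal_eq .
    show ?thesis
    proof (cases rule: min_prime_H_edge_cases[OF P ij, case_names both left right])
      case both
      have "in_square_at (- {m + i, m + j}) (lookup ?u)"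
      proof (cases "w i (m + i) \<le> a \<and> w j (m + j) \<le> b")
        case True
        then show ?thesis
          using ijV by (intro in_square_atI[OF wi wj]) (auto simp: lookup_edge_exp lookup_witness_exp)
      next
        case False
        then show ?thesis
          using c1 ijV by (intro in_square_atI[OF wj wj]) (auto simp: lookup_edge_exp lookup_witness_exp)
      qed
      then show ?thesis
        by (rule loc) (use both in auto)
    next
      case left
      have "in_square_at (- {j, m + i}) (lookup ?u)"
      proof (cases "w i j \<le> a")
        case True
        then show ?thesis
          using ijV by (intro in_square_atI[OF eij wj]) (auto simp: lookup_edge_exp lookup_witness_exp)
      next
        case False
        then show ?thesis
          using c2 ijV by (intro in_square_atI[OF wi wj]) (auto simp: lookup_edge_exp lookup_witness_exp)
      qed
      then show ?thesis
        by (rule loc) (use left in auto)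
    next
      case right
      have "in_square_at (- {i, m + j}) (lookup ?u)"
      proof (cases "2 * w j i \<le> b")
        case True
        then show ?thesis
          using ijV by (intro in_square_atI[OF eij eij]) (auto simp: lookup_edge_exp lookup_witness_exp)
      next
        case False
        then show ?thesis
          using c3 ijV by (intro in_square_atI[OF wj wj]) (auto simp: lookup_edge_exp lookup_witness_exp)
      qed
      then show ?thesis
        by (rule loc) (use right in auto)
    qed
  qed
  moreover have "single ?u 1 \<in> S"
    using poly_ring_single u_keys by blast
  ultimately show ?thesis
    unfolding symb_power2_iff by blast
qed

lemma symb_power2_ne_square_witness:
  assumes ij: "{i, j} \<in> EH"
    and n1: "\<not> (2 * w i j \<le> a \<and> 2 * w j i \<le> b)"
    and n2: "\<not> (w i j \<le> a \<and> w j i + w j (m + j) \<le> b)"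
    and c1: "(w i (m + i) \<le> a \<and> w j (m + j) \<le> b) \<or> 2 * w j (m + j) \<le> b"
    and c2: "w i j \<le> a \<or> w i (m + i) \<le> a"
    and c3: "2 * w j i \<le> b \<or> 2 * w j (m + j) \<le> b"
  shows "symb_power2 S edge_ideal \<noteq> ideal_prod S edge_ideal (edge_ideal :: 'k::field mpoly set)"
proof
  assume eq: "symb_power2 S edge_ideal = ideal_prod S edge_ideal (edge_ideal :: 'k mpoly set)"
  have "single (witness_exp i j a b) (1::'k) \<in> ideal_prod S edge_ideal edge_ideal"
    using witness_in_symb_power2[OF ij c1 c2 c3, where 'k = 'k] unfolding eq .
  then have "single (witness_exp i j a b) (1::'k) \<in> mon_ideal (2*m) edge_exp_sums"
    unfolding ideal_prod_edge_ideal_eq .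
  then have "in_square_at UNIV (lookup (witness_exp i j a b))"
    unfolding in_square_at_iff using mon_ideal_onD(2) by fastforce
  then show False
    using witness_notin_square[OF ij n1 n2] by blast
qed

lemma symb_power2_ne_square:
  assumes "\<not> weight_condition"
  shows "symb_power2 S edge_ideal \<noteq> ideal_prod S edge_ideal (edge_ideal :: 'k::field mpoly set)"
proof -
  obtain i j where ij: "{i, j} \<in> EH" and F: "\<not> ((w i (m + i) = w i j \<and> w j (m + j) = w j i) \<or>
       (w i (m + i) \<ge> 2 * w i j \<and> w j (m + j) \<ge> 2 * w j i))"
    using assms unfolding weight_condition_def by blast
  have ji: "{j, i} \<in> EH"
    using ij by (simp add: insert_commute)
  have apos: "1 \<le> w i j" "1 \<le> w j i"
    using weight_pos H_edge_in_whiskered ij ji by blast+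
  note witness = symb_power2_ne_square_witness[where 'k = 'k]
  show ?thesis
  proof (cases "w j (m + j) < w j i")
    case True
    show ?thesis
      by (rule witness[OF ij, where a = "w i j" and b = "2 * w j (m + j)"]) (use True apos in arith)+
  next
    case c1: False
    show ?thesis
    proof (cases "w i (m + i) < w i j")
      case True
      show ?thesis
        by (rule witness[OF ji, where a = "w j i" and b = "2 * w i (m + i)"]) (use True apos in arith)+
    next
      case c2: False
      show ?thesis
      proof (cases "2 * w i j \<le> w i (m + i)")
        case True
        then have "w j (m + j) < 2 * w j i"
          using F by linarith
        then show ?thesis
          by (intro witness[OF ji, where a = "w j (m + j)" and b = "w i (m + i)"])
            (use True c1 c2 apos in arith)+
      next
        case c3: False
        show ?thesis
        proof (cases "2 * w j i \<le> w j (m + j)")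
          case True
          show ?thesis
            by (rule witness[OF ij, where a = "w i (m + i)" and b = "w j (m + j)"])
              (use True c1 c2 c3 apos in arith)+
        next
          case c4: False
          show ?thesis
          proof (cases "w j i < w j (m + j)")
            case True
            show ?thesis
              by (rule witness[OF ij, where a = "w i (m + i)" and b = "2 * w j i"])
                (use True c1 c2 c3 c4 apos in arith)+
          next
            case False
            then have "w j (m + j) = w j i"
              using c1 by linarith
            then have "w i j < w i (m + i)"
              using F c2 by linarith
            then show ?thesis
              by (intro witness[OF ji, where a = "w j (m + j)" and b = "2 * w i j"])
                (use \<open>w j (m + j) = w j i\<close> c1 c2 c3 c4 apos in arith)+
          qed
        qed
      qed
    qed
  qed
qed

end

theorem theorem3p8:
  fixes m :: nat and EH :: "nat set set" and w :: "nat \<Rightarrow> nat \<Rightarrow> nat"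
    and I :: "'k::field mpoly set"
  assumes H_simple: "\<forall>e\<in>EH. \<exists>i j. e = {i, j} \<and> i \<noteq> j \<and> i \<in> {1..m} \<and> j \<in> {1..m}"
    and w_pos: "\<forall>i j. {i, j} \<in> whiskered m EH \<and> i \<noteq> j \<longrightarrow> w i j \<ge> 1"
    and I_def: "I = gen_ideal (poly_ring (2*m))
                  {mono2 i (w i j) j (w j i) | i j. i < j \<and> {i, j} \<in> whiskered m EH}"
    and no_embedded: "ass_primes (poly_ring (2*m)) I = min_primes (poly_ring (2*m)) I"
    and tri_free: "triangle_free (whiskered m EH)"
  shows "symb_power2 (poly_ring (2*m)) I = ideal_prod (poly_ring (2*m)) I I \<longleftrightarrow>
    (\<forall>i j. {i, j} \<in> EH \<longrightarrow>
       (w i (m + i) = w i j \<and> w j (m + j) = w j i) \<or>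
       (w i (m + i) \<ge> 2 * w i j \<and> w j (m + j) \<ge> 2 * w j i))"
proof -
  interpret whiskered_graph m EH w
    using H_simple w_pos tri_free by unfold_locales
  have I: "I = edge_ideal"
    unfolding I_def generators_eq gen_ideal_eq_edge_ideal ..
  have "symb_power2 S I = ideal_prod S I I \<longleftrightarrow> weight_condition"
  proof
    assume "symb_power2 S I = ideal_prod S I I"
    then show weight_condition
      using symb_power2_ne_square unfolding I by blast
  next
    assume weight_condition
    then have "symb_power2 S I \<subseteq> ideal_prod S I I"
      using symb_power2_subset_square ideal_prod_edge_ideal_eq unfolding I by blast
    moreover have "ideal_prod S I I \<subseteq> symb_power2 S I"
      unfolding I by (rule ideal_prod_subset_symb_power2[OF mon_ideal_onD(1)[THEN subsetI]])
    ultimately show "symb_power2 S I = ideal_prod S I I"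
      by (rule antisym)
  qed
  then show ?thesis
    unfolding weight_condition_def .
qed

end
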